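(* In each homology class of singular based matrices there is, up to isomorphism, either a unique primitive singular based matrix or a pair of primitive singular based matrices.
   Context: A singular based matrix (SBM) is a quadruple $(G,s,d,b)$ where $G$ is a finite set, $s,d\in G$, $H$ is an abelian group and $b:G\times G\to H$ is skew-symmetric. Elementary extensions: $\widetilde M_1$ transforms $(G,s,d,b)$ into $(G\amalg\{g\},s,d,b_1)$ with $b_1$ extending $b$ and $b_1(g,h)=0$ for all $h$; $\widetilde M_2$ into $(G\amalg\{g\},s,d,b_2)$ with $b_2$ extending $b$ and $b_2(g,h)=b_2(s,h)$ for all $h$; $\widetilde M_3$ into $(G\amalg\{g_i,g_j\},s,d,b_3)$ with $b_3$ any skew-symmetric extension of $b$ satisfying $b_3(g_i,h)+b_3(g_j,h)=b_3(s,h)$ for all $h$; $\widetilde M_i^{-1}$ denotes the inverse operations. Singularity switch $N$: if $g\in G$ satisfies $b(g,h)+b(d,h)=b(s,h)$ for all $h\in G$, $N$ transforms $(G,s,d,b)$ into $(G,s,g,b)$. Two SBMs $(G,s,d,b)$, $(G',s',d',b')$ are isomorphic if there is a bijection $G\to G'$ sending $s\mapsto s'$, $d\mapsto d'$ and transforming $b$ into $b'$. An SBM is primitive if it cannot be obtained from another SBM by an elementary extension, even after applications of singularity switches. Two SBMs are homologous (lie in the same homology class) if one is obtained from the other by a finite sequence of moves $\widetilde M_1^{\pm1},\widetilde M_2^{\pm1},\widetilde M_3^{\pm1}$ and $N$ (and isomorphisms). *)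

theory Defs
  imports Main
begin

text \<open>The ground set G is a
finite set of natural numbers (any finite set is isomorphic to one of these, and nat
always provides fresh elements for the extensions); the form b is only relevant on G.\<close>

record 'h sbm =
  grd :: "nat set"
  sng :: nat
  dst :: nat
  frm :: "nat \<Rightarrow> nat \<Rightarrow> 'h"

definition skew_on :: "nat set \<Rightarrow> (nat \<Rightarrow> nat \<Rightarrow> 'h::ab_group_add) \<Rightarrow> bool" where
  "skew_on G b \<longleftrightarrow> (\<forall>x\<in>G. \<forall>y\<in>G. b x y = - b y x)"

definition is_sbm :: "('h::ab_group_add) sbm \<Rightarrow> bool" where
  "is_sbm M \<longleftrightarrow> finite (grd M) \<and> sng M \<in> grd M \<and> dst M \<in> grd M \<and> skew_on (grd M) (frm M)"

definition sbm_iso :: "('h::ab_group_add) sbm \<Rightarrow> 'h sbm \<Rightarrow> bool" where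
  "sbm_iso M M' \<longleftrightarrow> is_sbm M \<and> is_sbm M' \<and>
     (\<exists>f. bij_betw f (grd M) (grd M') \<and> f (sng M) = sng M' \<and> f (dst M) = dst M' \<and>
          (\<forall>x\<in>grd M. \<forall>y\<in>grd M. frm M' (f x) (f y) = frm M x y))"

definition extends_on :: "nat set \<Rightarrow> (nat \<Rightarrow> nat \<Rightarrow> 'h) \<Rightarrow> (nat \<Rightarrow> nat \<Rightarrow> 'h) \<Rightarrow> bool" where
  "extends_on G b b' \<longleftrightarrow> (\<forall>x\<in>G. \<forall>y\<in>G. b' x y = b x y)"

definition move1 :: "('h::ab_group_add) sbm \<Rightarrow> 'h sbm \<Rightarrow> bool" where
  "move1 M M' \<longleftrightarrow> is_sbm M \<and> is_sbm M' \<and> sng M' = sng M \<and> dst M' = dst M \<and>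
     (\<exists>g. g \<notin> grd M \<and> grd M' = insert g (grd M) \<and> extends_on (grd M) (frm M) (frm M') \<and>
          (\<forall>h\<in>grd M'. frm M' g h = 0))"

definition move2 :: "('h::ab_group_add) sbm \<Rightarrow> 'h sbm \<Rightarrow> bool" where
  "move2 M M' \<longleftrightarrow> is_sbm M \<and> is_sbm M' \<and> sng M' = sng M \<and> dst M' = dst M \<and>
     (\<exists>g. g \<notin> grd M \<and> grd M' = insert g (grd M) \<and> extends_on (grd M) (frm M) (frm M') \<and>
          (\<forall>h\<in>grd M'. frm M' g h = frm M' (sng M) h))"

definition move3 :: "('h::ab_group_add) sbm \<Rightarrow> 'h sbm \<Rightarrow> bool" where
  "move3 M M' \<longleftrightarrow> is_sbm M \<and> is_sbm M' \<and> sng M' = sng M \<and> dst M' = dst M \<and>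
     (\<exists>gi gj. gi \<notin> grd M \<and> gj \<notin> grd M \<and> gi \<noteq> gj \<and> grd M' = insert gi (insert gj (grd M)) \<and>
          extends_on (grd M) (frm M) (frm M') \<and>
          (\<forall>h\<in>grd M'. frm M' gi h + frm M' gj h = frm M' (sng M) h))"

definition elem_ext :: "('h::ab_group_add) sbm \<Rightarrow> 'h sbm \<Rightarrow> bool" where
  "elem_ext M M' \<longleftrightarrow> move1 M M' \<or> move2 M M' \<or> move3 M M'"

definition sing_switch :: "('h::ab_group_add) sbm \<Rightarrow> 'h sbm \<Rightarrow> bool" where
  "sing_switch M M' \<longleftrightarrow> is_sbm M \<and>
     (\<exists>g\<in>grd M. (\<forall>h\<in>grd M. frm M g h + frm M (dst M) h = frm M (sng M) h) \<and>
        M' = M\<lparr>dst := g\<rparr>)"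

definition switch_rel :: "('h::ab_group_add) sbm \<Rightarrow> 'h sbm \<Rightarrow> bool" where
  "switch_rel = (\<lambda>M M'. is_sbm M \<and> is_sbm M' \<and> (sing_switch M M' \<or> sbm_iso M M'))\<^sup>*\<^sup>*"

definition primitive :: "('h::ab_group_add) sbm \<Rightarrow> bool" where
  "primitive M \<longleftrightarrow> is_sbm M \<and>
     \<not> (\<exists>M0 M1. elem_ext M0 M1 \<and> (switch_rel M1 M \<or> sbm_iso M1 M))"

definition hom_step :: "('h::ab_group_add) sbm \<Rightarrow> 'h sbm \<Rightarrow> bool" where
  "hom_step M M' \<longleftrightarrow> sbm_iso M M' \<or> elem_ext M M' \<or> elem_ext M' M \<or>
     sing_switch M M' \<or> sing_switch M' M"

definition homologous :: "('h::ab_group_add) sbm \<Rightarrow> 'h sbm \<Rightarrow> bool" where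
  "homologous M M' \<longleftrightarrow> is_sbm M \<and> is_sbm M' \<and> hom_step\<^sup>*\<^sup>* M M'"

end

theory Submission
  imports Defs "HOL-Combinatorics.Transposition"
begin

text \<open>An SBM reduces to another by switching its second distinguished element d to an
  admissible element and then undoing an elementary extension. Reductions shrink the ground set
  and are locally confluent modulo admissible switches and isomorphisms, so by Newman's lemma
  every SBM has an irreducible form, unique up to switches. Every homology move is, up to
  switches, a reduction or the inverse of one, so this form is an invariant of the homology
  class; and irreducible SBMs are primitive.

  A primitive SBM that is not irreducible has d \<noteq> s with the row of s, and deleting d gives
  the irreducible form, in which d = s. Since d = s admits no other switch, all such primitive
  SBMs of a class are isomorphic. The remaining primitive SBMs are admissible switches of one
  irreducible N, and these fall into at most two isomorphism classes: the rows complementary to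
  that of d are all equal, hence interchangeable by automorphisms.\<close>

definition zero_row :: "('h::ab_group_add) sbm \<Rightarrow> nat \<Rightarrow> bool" where
  "zero_row M x \<longleftrightarrow> (\<forall>h\<in>grd M. frm M x h = 0)"

definition sng_row :: "('h::ab_group_add) sbm \<Rightarrow> nat \<Rightarrow> bool" where
  "sng_row M x \<longleftrightarrow> (\<forall>h\<in>grd M. frm M x h = frm M (sng M) h)"

abbreviation trivial_row :: "('h::ab_group_add) sbm \<Rightarrow> nat \<Rightarrow> bool" where
  "trivial_row M x \<equiv> zero_row M x \<or> sng_row M x"

definition same_row :: "('h::ab_group_add) sbm \<Rightarrow> nat \<Rightarrow> nat \<Rightarrow> bool" where
  "same_row M x y \<longleftrightarrow> (\<forall>h\<in>grd M. frm M x h = frm M y h)"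

definition compl_rows :: "('h::ab_group_add) sbm \<Rightarrow> nat \<Rightarrow> nat \<Rightarrow> bool" where
  "compl_rows M x y \<longleftrightarrow> (\<forall>h\<in>grd M. frm M x h + frm M y h = frm M (sng M) h)"

lemma same_row_refl: "same_row M x x"
  by (simp add: same_row_def)

lemma same_row_sym: "same_row M x y \<Longrightarrow> same_row M y x"
  by (simp add: same_row_def)

lemma same_row_trans: "same_row M x y \<Longrightarrow> same_row M y z \<Longrightarrow> same_row M x z"
  by (simp add: same_row_def)

lemma compl_rows_sym: "compl_rows M x y \<Longrightarrow> compl_rows M y x"
  by (simp add: compl_rows_def add.commute)

lemma compl_rows_same_row: "same_row M w d \<Longrightarrow> compl_rows M z d \<Longrightarrow> compl_rows M z w"
  by (simp add: same_row_def compl_rows_def)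

lemma same_row_compl_rows: "compl_rows M w d \<Longrightarrow> same_row M z d \<Longrightarrow> compl_rows M z w"
  by (auto simp: same_row_def compl_rows_def add.commute)

lemma compl_rows_compl_rows: "compl_rows M w d \<Longrightarrow> compl_rows M z d \<Longrightarrow> same_row M z w"
  by (auto simp: same_row_def compl_rows_def) (metis add_right_cancel)

lemma same_row_zero_row: "same_row M w d \<Longrightarrow> zero_row M d \<Longrightarrow> zero_row M w"
  by (simp add: same_row_def zero_row_def)

lemma same_row_sng_row: "same_row M w d \<Longrightarrow> sng_row M d \<Longrightarrow> sng_row M w"
  by (simp add: same_row_def sng_row_def)

lemma compl_rows_zero_row: "compl_rows M w d \<Longrightarrow> zero_row M d \<Longrightarrow> sng_row M w"
  by (simp add: compl_rows_def zero_row_def sng_row_def)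

lemma compl_rows_sng_row: "compl_rows M w d \<Longrightarrow> sng_row M d \<Longrightarrow> zero_row M w"
  by (simp add: compl_rows_def zero_row_def sng_row_def)

lemma zero_rows_same: "zero_row M w \<Longrightarrow> zero_row M z \<Longrightarrow> same_row M z w"
  by (simp add: same_row_def zero_row_def)

lemma sng_rows_same: "sng_row M w \<Longrightarrow> sng_row M z \<Longrightarrow> same_row M z w"
  by (simp add: same_row_def sng_row_def)

lemma zero_sng_compl_rows: "zero_row M w \<Longrightarrow> sng_row M z \<Longrightarrow> compl_rows M z w"
  by (simp add: compl_rows_def zero_row_def sng_row_def)

lemma sng_zero_compl_rows: "sng_row M w \<Longrightarrow> zero_row M z \<Longrightarrow> compl_rows M z w"
  by (simp add: compl_rows_def zero_row_def sng_row_def)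

lemma trivial_row_compl: "compl_rows M g h \<Longrightarrow> trivial_row M g \<Longrightarrow> trivial_row M h"
  by (meson compl_rows_sym compl_rows_zero_row compl_rows_sng_row)

lemma sng_row_sng: "sng_row M (sng M)"
  by (simp add: sng_row_def)

lemma sng_row_column:
  assumes "is_sbm M" "sng_row M d" "d \<in> grd M" "y \<in> grd M"
  shows "frm M y d = frm M y (sng M)"
proof -
  have skew: "\<And>x y. x \<in> grd M \<Longrightarrow> y \<in> grd M \<Longrightarrow> frm M x y = - frm M y x"
    using assms(1) unfolding is_sbm_def skew_on_def by blast
  have "sng M \<in> grd M" using assms(1) by (simp add: is_sbm_def)
  then show ?thesis
    using skew[OF assms(4,3)] skew[of "sng M" y] assms(2,4) by (simp add: sng_row_def)
qed

definition with_dst :: "('h::ab_group_add) sbm \<Rightarrow> nat \<Rightarrow> 'h sbm" where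
  "with_dst M x = M\<lparr>dst := x\<rparr>"

definition del_elems :: "('h::ab_group_add) sbm \<Rightarrow> nat set \<Rightarrow> 'h sbm" where
  "del_elems M X = M\<lparr>grd := grd M - X\<rparr>"

lemma with_dst_simps [simp]:
  "grd (with_dst M x) = grd M" "sng (with_dst M x) = sng M" "dst (with_dst M x) = x"
  "frm (with_dst M x) = frm M" "with_dst (with_dst M x) y = with_dst M y" "with_dst M (dst M) = M"
  by (simp_all add: with_dst_def)

lemma del_elems_simps [simp]:
  "grd (del_elems M X) = grd M - X" "sng (del_elems M X) = sng M" "dst (del_elems M X) = dst M"
  "frm (del_elems M X) = frm M" "del_elems (del_elems M X) Y = del_elems M (X \<union> Y)"
  "with_dst (del_elems M X) x = del_elems (with_dst M x) X" "del_elems M {} = M"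
  by (simp_all add: del_elems_def with_dst_def Diff_eq Int_assoc)

lemma rows_with_dst [simp]:
  "zero_row (with_dst M x) = zero_row M" "sng_row (with_dst M x) = sng_row M"
  "same_row (with_dst M x) = same_row M" "compl_rows (with_dst M x) = compl_rows M"
  by (auto simp: zero_row_def sng_row_def same_row_def compl_rows_def fun_eq_iff)

lemma rows_del_elems:
  "zero_row M g \<Longrightarrow> zero_row (del_elems M X) g" "sng_row M g \<Longrightarrow> sng_row (del_elems M X) g"
  "same_row M x y \<Longrightarrow> same_row (del_elems M X) x y"
  "compl_rows M x y \<Longrightarrow> compl_rows (del_elems M X) x y"
  by (auto simp: zero_row_def sng_row_def same_row_def compl_rows_def)

lemma is_sbm_with_dst: "is_sbm M \<Longrightarrow> x \<in> grd M \<Longrightarrow> is_sbm (with_dst M x)"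
  by (simp add: is_sbm_def)

lemma skew_on_subset: "skew_on G b \<Longrightarrow> H \<subseteq> G \<Longrightarrow> skew_on H b"
  unfolding skew_on_def by blast

lemma is_sbm_del_elems_with_dst:
  "is_sbm M \<Longrightarrow> x \<in> grd M \<Longrightarrow> sng M \<notin> X \<Longrightarrow> x \<notin> X \<Longrightarrow> is_sbm (del_elems (with_dst M x) X)"
  unfolding is_sbm_def by (auto elim: skew_on_subset)

lemma sbm_isoE:
  assumes "sbm_iso M M'"
  obtains f where "bij_betw f (grd M) (grd M')" "f (sng M) = sng M'" "f (dst M) = dst M'"
    "\<And>x y. x \<in> grd M \<Longrightarrow> y \<in> grd M \<Longrightarrow> frm M' (f x) (f y) = frm M x y" "is_sbm M" "is_sbm M'"
  using assms unfolding sbm_iso_def by blast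

lemma sbm_iso_refl: "is_sbm M \<Longrightarrow> sbm_iso M M"
  unfolding sbm_iso_def by (auto intro!: exI[of _ id])

lemma sbm_iso_sym:
  assumes "sbm_iso M M'"
  shows "sbm_iso M' M"
proof -
  obtain f where f: "bij_betw f (grd M) (grd M')" "f (sng M) = sng M'" "f (dst M) = dst M'"
    "\<And>x y. x \<in> grd M \<Longrightarrow> y \<in> grd M \<Longrightarrow> frm M' (f x) (f y) = frm M x y" "is_sbm M" "is_sbm M'"
    using sbm_isoE[OF assms] by metis
  let ?g = "inv_into (grd M) f"
  have g: "bij_betw ?g (grd M') (grd M)"
    using f(1) by (rule bij_betw_inv_into)
  have sd: "sng M \<in> grd M" "dst M \<in> grd M"
    using f(5) by (auto simp: is_sbm_def)
  have "frm M (?g x) (?g y) = frm M' x y" if "x \<in> grd M'" "y \<in> grd M'" for x y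
    using f(4)[of "?g x" "?g y"] that f(1) g
    by (simp add: bij_betw_inv_into_right bij_betwE)
  then show ?thesis
    unfolding sbm_iso_def using f sd g
    by (metis bij_betw_inv_into_left)
qed

lemma sbm_iso_trans:
  assumes "sbm_iso A B" "sbm_iso B C"
  shows "sbm_iso A C"
proof -
  obtain f where f: "bij_betw f (grd A) (grd B)" "f (sng A) = sng B" "f (dst A) = dst B"
    "\<And>x y. x \<in> grd A \<Longrightarrow> y \<in> grd A \<Longrightarrow> frm B (f x) (f y) = frm A x y" "is_sbm A"
    using sbm_isoE[OF assms(1)] by metis
  obtain g where g: "bij_betw g (grd B) (grd C)" "g (sng B) = sng C" "g (dst B) = dst C"
    "\<And>x y. x \<in> grd B \<Longrightarrow> y \<in> grd B \<Longrightarrow> frm C (g x) (g y) = frm B x y" "is_sbm C"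
    using sbm_isoE[OF assms(2)] by metis
  have "frm C (g (f x)) (g (f y)) = frm A x y" if "x \<in> grd A" "y \<in> grd A" for x y
    using f(1,4) g(4) that by (simp add: bij_betwE)
  then show ?thesis
    unfolding sbm_iso_def using f g bij_betw_trans[OF f(1) g(1)] by auto
qed

text \<open>The elements that may replace the second distinguished element without changing the
  homology class: a complementary row (a singularity switch), an equal row (an isomorphism,
  by a transposition), or, when both rows are trivial, a chain of switches through an
  auxiliary zero row.\<close>

definition admissible :: "('h::ab_group_add) sbm \<Rightarrow> nat \<Rightarrow> bool" where
  "admissible M x \<longleftrightarrow> x \<in> grd M \<and> (same_row M x (dst M) \<or> compl_rows M x (dst M) \<or>
     (trivial_row M (dst M) \<and> trivial_row M x))"

text \<open>The sets deleted by an inverse elementary extension while x is the second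
  distinguished element.\<close>

definition removable :: "('h::ab_group_add) sbm \<Rightarrow> nat \<Rightarrow> nat set \<Rightarrow> bool" where
  "removable M x X \<longleftrightarrow> X \<subseteq> grd M \<and> sng M \<notin> X \<and> x \<notin> X \<and>
     ((\<exists>g. X = {g} \<and> trivial_row M g) \<or> (\<exists>g1 g2. g1 \<noteq> g2 \<and> X = {g1, g2} \<and> compl_rows M g1 g2))"

lemma admissible_in_grd: "admissible M x \<Longrightarrow> x \<in> grd M"
  by (simp add: admissible_def)

lemma admissible_dst: "is_sbm M \<Longrightarrow> admissible M (dst M)"
  by (simp add: admissible_def is_sbm_def same_row_def)

lemma admissible_with_dst:
  assumes "admissible M w" "admissible M z"
  shows "admissible (with_dst M w) z"
proof -
  let ?d = "dst M"
  have "same_row M z w \<or> compl_rows M z w \<or> (trivial_row M w \<and> trivial_row M z)"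
    using assms unfolding admissible_def
    by (meson same_row_sym same_row_trans compl_rows_same_row same_row_compl_rows
        compl_rows_compl_rows same_row_zero_row same_row_sng_row compl_rows_zero_row
        compl_rows_sng_row zero_rows_same sng_rows_same zero_sng_compl_rows sng_zero_compl_rows)
  then show ?thesis
    using assms(2) by (simp add: admissible_def)
qed

lemma admissible_with_dstD:
  assumes "is_sbm M" "admissible M x" "admissible (with_dst M x) z"
  shows "admissible M z"
  using admissible_with_dst[OF admissible_with_dst[OF assms(2) admissible_dst[OF assms(1)]] assms(3)]
  by simp

lemma admissible_same_row:
  "is_sbm M \<Longrightarrow> admissible M x \<Longrightarrow> same_row M z x \<Longrightarrow> z \<in> grd M \<Longrightarrow> admissible M z"
  by (rule admissible_with_dstD[of M x]) (auto simp: admissible_def)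

lemma admissible_compl_rows:
  "is_sbm M \<Longrightarrow> admissible M x \<Longrightarrow> compl_rows M z x \<Longrightarrow> z \<in> grd M \<Longrightarrow> admissible M z"
  by (rule admissible_with_dstD[of M x]) (auto simp: admissible_def)

lemma admissible_sng:
  assumes "is_sbm M" "admissible M x" "trivial_row M x"
  shows "admissible M (sng M)"
proof (rule admissible_with_dstD[OF assms(1,2)])
  show "admissible (with_dst M x) (sng M)"
    using assms(1,3) sng_row_sng by (auto simp: admissible_def is_sbm_def)
qed

lemma admissible_del_elems: "admissible M z \<Longrightarrow> z \<notin> X \<Longrightarrow> admissible (del_elems M X) z"
  unfolding admissible_def by (auto dest: rows_del_elems)

lemma removableD:
  "removable M x X \<Longrightarrow> X \<subseteq> grd M" "removable M x X \<Longrightarrow> sng M \<notin> X"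
  "removable M x X \<Longrightarrow> x \<notin> X"
  by (simp_all add: removable_def)

lemma removable_cases:
  assumes "removable M x X"
  obtains g where "X = {g}" "trivial_row M g"
  | g1 g2 where "g1 \<noteq> g2" "X = {g1, g2}" "compl_rows M g1 g2"
  using assms by (auto simp: removable_def)

lemma removable_with_dst [simp]: "removable (with_dst M z) x X = removable M x X"
  by (simp add: removable_def)

lemma removable_del_elems:
  assumes "removable M x Y" "Y \<inter> X = {}"
  shows "removable (del_elems M X) x Y"
  using assms(1)
proof (cases rule: removable_cases)
  case (1 g)
  then show ?thesis
    using assms by (auto simp: removable_def dest: rows_del_elems)
next
  case (2 g1 g2)
  then show ?thesis
    using assms rows_del_elems(4)[OF 2(3)] by (auto simp: removable_def)
qed

lemma removable_other: "removable M y Y \<Longrightarrow> x \<notin> Y \<Longrightarrow> removable M x Y"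
  by (simp add: removable_def)

lemma removable_singleton: "removable M x {g} \<Longrightarrow> trivial_row M g"
  by (auto simp: removable_def doubleton_eq_iff)

lemma removable_pair_through:
  assumes "removable M x X" "g \<in> X" "X \<noteq> {g}"
  shows "\<exists>h. h \<noteq> g \<and> X = {g, h} \<and> compl_rows M g h"
  using assms(1)
proof (cases rule: removable_cases)
  case (1 g')
  then show ?thesis using assms(2,3) by simp
next
  case (2 g1 g2)
  then show ?thesis using assms(2) by (metis compl_rows_sym insert_commute insertE singletonD)
qed

context
  fixes M M' :: "('h::ab_group_add) sbm" and f :: "nat \<Rightarrow> nat"
  assumes bij: "bij_betw f (grd M) (grd M')" and f_sng: "f (sng M) = sng M'"
    and f_frm: "\<And>x y. x \<in> grd M \<Longrightarrow> y \<in> grd M \<Longrightarrow> frm M' (f x) (f y) = frm M x y"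
    and M: "is_sbm M"
begin

private lemma all_image: "(\<And>h. h \<in> grd M \<Longrightarrow> P (f h)) \<Longrightarrow> \<forall>h'\<in>grd M'. P h'"
  using bij by (metis bij_betw_imp_surj_on imageE)

private lemma in_grd_image: "x \<in> grd M \<Longrightarrow> f x \<in> grd M'"
  using bij by (simp add: bij_betwE)

lemma zero_row_image: "x \<in> grd M \<Longrightarrow> zero_row M x \<Longrightarrow> zero_row M' (f x)"
  unfolding zero_row_def by (rule all_image) (simp add: f_frm)

lemma sng_row_image: "x \<in> grd M \<Longrightarrow> sng_row M x \<Longrightarrow> sng_row M' (f x)"
  unfolding sng_row_def using f_frm M f_sng by (intro all_image) (metis is_sbm_def)

lemma same_row_image: "x \<in> grd M \<Longrightarrow> y \<in> grd M \<Longrightarrow> same_row M x y \<Longrightarrow> same_row M' (f x) (f y)"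
  unfolding same_row_def by (rule all_image) (simp add: f_frm)

lemma compl_rows_image:
  "x \<in> grd M \<Longrightarrow> y \<in> grd M \<Longrightarrow> compl_rows M x y \<Longrightarrow> compl_rows M' (f x) (f y)"
  unfolding compl_rows_def using f_frm M f_sng by (intro all_image) (metis is_sbm_def)

lemma admissible_image:
  assumes "f (dst M) = dst M'" "admissible M x"
  shows "admissible M' (f x)"
proof -
  have "dst M \<in> grd M" "x \<in> grd M"
    using M assms(2) by (auto simp: is_sbm_def admissible_def)
  then show ?thesis
    using assms in_grd_image same_row_image compl_rows_image zero_row_image sng_row_image
    unfolding admissible_def by metis
qed

lemma removable_image:
  assumes "x \<in> grd M" "removable M x X"
  shows "removable M' (f x) (f ` X)"
proof -
  have X: "X \<subseteq> grd M" "sng M \<notin> X" "x \<notin> X"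
    using assms(2) by (auto simp: removable_def)
  have inj: "inj_on f (grd M)"
    using bij by (simp add: bij_betw_def)
  have "sng M \<in> grd M"
    using M by (simp add: is_sbm_def)
  then have excluded: "sng M' \<notin> f ` X" "f x \<notin> f ` X"
    using X assms(1) inj_on_image_mem_iff[OF inj] by (simp_all flip: f_sng)
  from assms(2) show ?thesis
  proof (cases rule: removable_cases)
    case (1 g)
    then show ?thesis
      using X excluded zero_row_image sng_row_image in_grd_image by (auto simp: removable_def)
  next
    case (2 g1 g2)
    then have "f g1 \<noteq> f g2"
      using X inj by (auto dest: inj_onD)
    then show ?thesis
      using 2 X excluded compl_rows_image in_grd_image by (auto simp: removable_def)
  qed
qed

lemma sbm_iso_image:
  assumes "is_sbm M'" "x \<in> grd M" "X \<subseteq> grd M" "sng M \<notin> X" "x \<notin> X"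
  shows "sbm_iso (del_elems (with_dst M x) X) (del_elems (with_dst M' (f x)) (f ` X))"
proof -
  have inj: "inj_on f (grd M)"
    using bij by (simp add: bij_betw_def)
  have "sng M \<in> grd M"
    using M by (simp add: is_sbm_def)
  then have excluded: "sng M' \<notin> f ` X" "f x \<notin> f ` X"
    using assms(2-5) inj_on_image_mem_iff[OF inj] by (simp_all flip: f_sng)
  have "bij_betw f (grd M - X) (grd M' - f ` X)"
    using bij bij_betw_subset[OF bij assms(3) refl] assms(3) in_grd_image
    by (intro bij_betw_DiffI) auto
  moreover have "is_sbm (del_elems (with_dst M x) X)"
    using M assms by (intro is_sbm_del_elems_with_dst)
  moreover have "is_sbm (del_elems (with_dst M' (f x)) (f ` X))"
    using assms(1,2) excluded in_grd_image by (intro is_sbm_del_elems_with_dst)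
  ultimately show ?thesis
    unfolding sbm_iso_def using f_sng f_frm by (auto intro!: exI[of _ f])
qed

end

lemma frm_transpose:
  assumes "is_sbm M" "a \<in> grd M" "c \<in> grd M" "same_row M a c" "u \<in> grd M" "v \<in> grd M"
  shows "frm M (transpose a c u) (transpose a c v) = frm M u v"
proof -
  let ?b = "frm M"
  have skew: "\<And>x y. x \<in> grd M \<Longrightarrow> y \<in> grd M \<Longrightarrow> ?b x y = - ?b y x"
    using assms(1) unfolding is_sbm_def skew_on_def by blast
  have row: "?b a h = ?b c h" if "h \<in> grd M" for h
    using assms(4) that by (simp add: same_row_def)
  have column: "?b h a = ?b h c" if "h \<in> grd M" for h
    using skew[OF that assms(2)] skew[OF assms(3) that] row[OF that] by simp
  show ?thesis
  proof (cases "a = c")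
    case False
    then show ?thesis
      using assms(2,3,5,6)
      by (cases "u = a"; cases "u = c"; cases "v = a"; cases "v = c") (simp_all add: row column)
  qed simp
qed

lemma sbm_iso_transpose:
  assumes "is_sbm M" "a \<in> grd M" "c \<in> grd M" "same_row M a c" "a \<noteq> sng M" "c \<noteq> sng M"
    "x \<in> grd M" "X \<subseteq> grd M" "sng M \<notin> X" "x \<notin> X"
  shows "sbm_iso (del_elems (with_dst M x) X)
           (del_elems (with_dst M (transpose a c x)) (transpose a c ` X))"
proof (rule sbm_iso_image[where f = "transpose a c"])
  show "bij_betw (transpose a c) (grd M) (grd M)"
    using assms(2,3) by simp
  show "transpose a c (sng M) = sng M"
    using assms(5,6) by simp
  show "frm M (transpose a c y) (transpose a c z) = frm M y z" if "y \<in> grd M" "z \<in> grd M" for y z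
    using frm_transpose[OF assms(1-4) that] .
qed (use assms in auto)

lemma sbm_iso_with_dst_same_row:
  assumes "is_sbm M" "z \<in> grd M" "w \<in> grd M" "same_row M z w" "z \<noteq> sng M" "w \<noteq> sng M"
  shows "sbm_iso (with_dst M z) (with_dst M w)"
  using sbm_iso_transpose[OF assms(1-6) assms(2), of "{}"] by simp

section \<open>Reductions\<close>

definition reduces :: "('h::ab_group_add) sbm \<Rightarrow> 'h sbm \<Rightarrow> bool" where
  "reduces M A \<longleftrightarrow> is_sbm M \<and>
     (\<exists>x X. admissible M x \<and> removable M x X \<and> A = del_elems (with_dst M x) X)"

definition adm_switch :: "('h::ab_group_add) sbm \<Rightarrow> 'h sbm \<Rightarrow> bool" where
  "adm_switch M M' \<longleftrightarrow> is_sbm M \<and> (\<exists>z. admissible M z \<and> M' = with_dst M z)"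

definition switch_step :: "('h::ab_group_add) sbm \<Rightarrow> 'h sbm \<Rightarrow> bool" where
  "switch_step M M' \<longleftrightarrow> sbm_iso M M' \<or> adm_switch M M'"

abbreviation switch_equiv :: "('h::ab_group_add) sbm \<Rightarrow> 'h sbm \<Rightarrow> bool" where
  "switch_equiv \<equiv> switch_step\<^sup>*\<^sup>*"

definition reduces_to :: "('h::ab_group_add) sbm \<Rightarrow> 'h sbm \<Rightarrow> bool" where
  "reduces_to = (\<lambda>A B. switch_step A B \<or> reduces A B)\<^sup>*\<^sup>*"

definition joinable :: "('h::ab_group_add) sbm \<Rightarrow> 'h sbm \<Rightarrow> bool" where
  "joinable A B \<longleftrightarrow> (\<exists>C. reduces_to A C \<and> reduces_to B C)"

definition irreducible :: "('h::ab_group_add) sbm \<Rightarrow> bool" where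
  "irreducible N \<longleftrightarrow> is_sbm N \<and> \<not> (\<exists>A. reduces N A)"

lemma reduces_is_sbm: "reduces M A \<Longrightarrow> is_sbm M \<and> is_sbm A"
  by (auto simp: reduces_def removable_def intro!: is_sbm_del_elems_with_dst admissible_in_grd)

lemma reduces_card_less:
  assumes "reduces M A"
  shows "card (grd A) < card (grd M)"
proof -
  obtain x X where "is_sbm M" "removable M x X" "A = del_elems (with_dst M x) X"
    using assms by (auto simp: reduces_def)
  then show ?thesis
    by (auto simp: removable_def is_sbm_def intro!: psubset_card_mono elim!: removable_cases)
qed

lemma adm_switch_is_sbm: "adm_switch M A \<Longrightarrow> is_sbm M \<and> is_sbm A"
  by (auto simp: adm_switch_def intro!: is_sbm_with_dst admissible_in_grd)

lemma adm_switch_sym: "adm_switch M M' \<Longrightarrow> adm_switch M' M"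
  unfolding adm_switch_def
  by (metis admissible_dst admissible_in_grd admissible_with_dst is_sbm_with_dst with_dst_simps(5,6))

lemma adm_switch_del_elems:
  assumes "is_sbm M" "admissible M x" "admissible M z" "sng M \<notin> X" "x \<notin> X" "z \<notin> X"
  shows "adm_switch (del_elems (with_dst M x) X) (del_elems (with_dst M z) X)"
proof -
  have "admissible (del_elems (with_dst M x) X) z"
    using admissible_with_dst[OF assms(2,3)] assms(6) by (rule admissible_del_elems)
  moreover have "is_sbm (del_elems (with_dst M x) X)"
    using assms by (auto intro: is_sbm_del_elems_with_dst admissible_in_grd)
  ultimately show ?thesis
    by (auto simp: adm_switch_def intro!: exI[of _ z])
qed

lemma switch_step_sym: "switch_step M M' \<Longrightarrow> switch_step M' M"
  by (auto simp: switch_step_def intro: sbm_iso_sym adm_switch_sym)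

lemma switch_step_is_sbm: "switch_step M M' \<Longrightarrow> is_sbm M \<and> is_sbm M'"
  by (auto simp: switch_step_def sbm_iso_def dest: adm_switch_is_sbm)

lemma switch_equiv_sym: "switch_equiv M M' \<Longrightarrow> switch_equiv M' M"
proof (induction rule: rtranclp_induct)
  case (step y z)
  then show ?case
    by (meson converse_rtranclp_into_rtranclp switch_step_sym)
qed simp

lemma switch_equiv_is_sbm: "switch_equiv M M' \<Longrightarrow> is_sbm M \<Longrightarrow> is_sbm M'"
  by (induction rule: rtranclp_induct) (auto dest: switch_step_is_sbm)

lemma reduces_to_refl: "reduces_to A A"
  by (simp add: reduces_to_def)

lemma reduces_to_trans: "reduces_to A B \<Longrightarrow> reduces_to B C \<Longrightarrow> reduces_to A C"
  by (simp add: reduces_to_def)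

lemma reduces_to_switch_step: "switch_step A B \<Longrightarrow> reduces_to A B"
  by (simp add: reduces_to_def r_into_rtranclp)

lemma reduces_to_reduces: "reduces A B \<Longrightarrow> reduces_to A B"
  by (simp add: reduces_to_def r_into_rtranclp)

lemma reduces_to_sbm_iso: "sbm_iso A B \<Longrightarrow> reduces_to A B"
  by (simp add: reduces_to_switch_step switch_step_def)

lemma reduces_to_adm_switch: "adm_switch A B \<Longrightarrow> reduces_to A B"
  by (simp add: reduces_to_switch_step switch_step_def)

lemma reduces_to_is_sbm: "reduces_to M N \<Longrightarrow> is_sbm M \<Longrightarrow> is_sbm N"
  unfolding reduces_to_def
  by (induction rule: rtranclp_induct) (auto dest: switch_step_is_sbm reduces_is_sbm)

lemma joinable_sym: "joinable A B \<Longrightarrow> joinable B A"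
  by (auto simp: joinable_def)

lemma joinable_reduces_to: "reduces_to A B \<Longrightarrow> joinable A B"
  using reduces_to_refl by (auto simp: joinable_def)

section \<open>Local confluence\<close>

lemma reduces_to_switch_and_delete:
  assumes "is_sbm M" "admissible M x" "removable M x X" "admissible M z" "z \<notin> X"
    "removable M z W" "W \<inter> X = {}"
  shows "reduces_to (del_elems (with_dst M x) X) (del_elems (with_dst M z) (X \<union> W))"
proof -
  have X: "sng M \<notin> X" "x \<notin> X"
    using assms(3) by (auto simp: removable_def)
  have "is_sbm (del_elems (with_dst M z) X)"
    using assms X by (auto intro: is_sbm_del_elems_with_dst admissible_in_grd)
  moreover have "admissible (del_elems (with_dst M z) X) z"
    using admissible_dst[OF is_sbm_with_dst[OF assms(1) admissible_in_grd[OF assms(4)]]] assms(5)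
    by (auto intro: admissible_del_elems)
  moreover have "removable (del_elems (with_dst M z) X) z W"
    using assms(6,7) by (simp add: removable_del_elems)
  ultimately have "reduces (del_elems (with_dst M z) X) (del_elems (with_dst M z) (X \<union> W))"
    unfolding reduces_def by force
  then show ?thesis
    using adm_switch_del_elems[OF assms(1,2,4) X assms(5)]
    by (blast intro: reduces_to_trans reduces_to_adm_switch reduces_to_reduces)
qed

lemma joinable_overlapping_pairs:
  assumes "is_sbm M" "admissible M x" "removable M x {g, h1}" "admissible M y" "removable M y {g, h2}"
    "h1 \<noteq> h2" "g \<noteq> h1" "g \<noteq> h2" "compl_rows M g h1" "compl_rows M g h2"
  shows "reduces_to (del_elems (with_dst M x) {g, h1}) (del_elems (with_dst M y) {g, h2})"
proof -
  let ?t = "transpose h1 h2"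
  have same: "same_row M h1 h2"
    using compl_rows_compl_rows[OF compl_rows_sym[OF assms(10)] compl_rows_sym[OF assms(9)]] .
  have X: "{g, h1} \<subseteq> grd M" "sng M \<notin> {g, h1}" "x \<notin> {g, h1}"
    and Y: "{g, h2} \<subseteq> grd M" "sng M \<notin> {g, h2}" "y \<notin> {g, h2}"
    using assms(3,5) by (auto simp: removable_def)
  have image: "?t ` {g, h1} = {g, h2}"
    using assms(6-8) by auto
  have "sbm_iso (del_elems (with_dst M x) {g, h1}) (del_elems (with_dst M (?t x)) {g, h2})"
    using sbm_iso_transpose[OF assms(1) _ _ same _ _ admissible_in_grd[OF assms(2)] X(1,2,3)]
      X Y image by auto
  moreover have "?t x \<notin> {g, h2}"
    using X(3) unfolding image[symmetric] in_transpose_image_iff by simp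
  moreover have "admissible M (?t x)"
    using admissible_same_row[OF assms(1,2)] same X admissible_in_grd[OF assms(2)]
    by (metis (no_types, lifting) Y(1) insert_subset same_row_refl same_row_sym transpose_def)
  ultimately show ?thesis
    using adm_switch_del_elems[OF assms(1) _ assms(4) Y(2) _ Y(3)]
    by (meson reduces_to_adm_switch reduces_to_sbm_iso reduces_to_trans)
qed

lemma joinable_single_in_pair:
  assumes "is_sbm M" "admissible M x" "removable M x {g}" "admissible M y" "removable M y {g, h}"
    "g \<noteq> h" "trivial_row M g" "compl_rows M g h"
  shows "joinable (del_elems (with_dst M x) {g}) (del_elems (with_dst M y) {g, h})"
proof -
  have X: "sng M \<notin> {g}" "x \<notin> {g}" and Y: "{g, h} \<subseteq> grd M" "sng M \<notin> {g, h}" "y \<notin> {g, h}"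
    using assms(3,5) by (auto simp: removable_def)
  have h: "trivial_row M h"
    using trivial_row_compl[OF assms(8,7)] .
  define z where "z = (if x = h then sng M else x)"
  have z: "admissible M z" "z \<notin> {g}" "z \<notin> {g, h}"
    using assms(2) admissible_sng[OF assms(1) _ h] X Y unfolding z_def by auto
  have "removable M z {h}"
    using h z Y by (auto simp: removable_def)
  then have "reduces_to (del_elems (with_dst M x) {g}) (del_elems (with_dst M z) {g, h})"
    using reduces_to_switch_and_delete[OF assms(1-3) z(1,2)] assms(6) by (simp add: insert_commute)
  moreover have "reduces_to (del_elems (with_dst M y) {g, h}) (del_elems (with_dst M z) {g, h})"
    using adm_switch_del_elems[OF assms(1,4) z(1) Y(2,3) z(3)] by (rule reduces_to_adm_switch)
  ultimately show ?thesis
    by (auto simp: joinable_def)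
qed

lemma joinable_crossed_pairs:
  assumes "is_sbm M" "admissible M y"
    "{x, x', y, y'} \<subseteq> grd M" "sng M \<notin> {x, x', y, y'}" "distinct [x, x', y, y']"
    "compl_rows M x x'" "compl_rows M y y'" "same_row M y x \<or> compl_rows M y x"
  shows "joinable (del_elems (with_dst M x) {y, y'}) (del_elems (with_dst M y) {x, x'})"
  using assms(8)
proof
  assume "same_row M y x"
  then have xy: "same_row M x y" by (rule same_row_sym)
  have x'y': "same_row M x' y'"
    using compl_rows_compl_rows compl_rows_same_row xy assms(6,7) compl_rows_sym by meson
  have "sbm_iso (del_elems (with_dst M x) {y, y'}) (del_elems (with_dst M y) {x, y'})"
    using sbm_iso_transpose[OF assms(1) _ _ xy, of x "{y, y'}"] assms(3-5) by auto
  moreover have "sbm_iso (del_elems (with_dst M y) {x, y'}) (del_elems (with_dst M y) {x, x'})"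
    using sbm_iso_transpose[OF assms(1) _ _ x'y', of y "{x, y'}"] assms(3-5)
    by (auto simp: insert_commute)
  ultimately show ?thesis
    by (meson joinable_reduces_to reduces_to_sbm_iso reduces_to_trans)
next
  assume yx: "compl_rows M y x"
  have xy': "same_row M x y'"
    using compl_rows_compl_rows[OF compl_rows_sym[OF yx] compl_rows_sym[OF assms(7)]] same_row_sym
    by blast
  have x'y: "same_row M x' y"
    using compl_rows_compl_rows[OF yx compl_rows_sym[OF assms(6)]] .
  have "sbm_iso (del_elems (with_dst M x) {y, y'}) (del_elems (with_dst M y') {y, x})"
    using sbm_iso_transpose[OF assms(1) _ _ xy', of x "{y, y'}"] assms(3-5)
    by (auto simp: insert_commute)
  moreover have "sbm_iso (del_elems (with_dst M y') {y, x}) (del_elems (with_dst M y') {x, x'})"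
    using sbm_iso_transpose[OF assms(1) _ _ x'y, of y' "{y, x}"] assms(3-5)
    by (auto simp: insert_commute)
  moreover have "adm_switch (del_elems (with_dst M y') {x, x'}) (del_elems (with_dst M y) {x, x'})"
    using admissible_compl_rows[OF assms(1,2) compl_rows_sym[OF assms(7)]]
      adm_switch_del_elems[OF assms(1) _ assms(2)] assms(3-5) by auto
  ultimately show ?thesis
    by (meson joinable_reduces_to reduces_to_adm_switch reduces_to_sbm_iso reduces_to_trans)
qed

text \<open>If no admissible element avoids both removable sets, then each of x, y lies in the
  set removed along with the other.\<close>

lemma joinable_disjoint_blocked:
  assumes "is_sbm M" "admissible M x" "removable M x X" "admissible M y" "removable M y Y"
    "X \<inter> Y = {}" "\<forall>z. admissible M z \<longrightarrow> z \<in> X \<or> z \<in> Y"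
  shows "joinable (del_elems (with_dst M x) X) (del_elems (with_dst M y) Y)"
proof -
  have X: "X \<subseteq> grd M" "sng M \<notin> X" "x \<notin> X" and Y: "Y \<subseteq> grd M" "sng M \<notin> Y" "y \<notin> Y"
    using assms(3,5) by (auto simp: removable_def)
  have "\<not> admissible M (sng M)"
    using assms(7) X Y by auto
  then have "\<not> trivial_row M x" "\<not> trivial_row M y"
    using admissible_sng[OF assms(1,2)] admissible_sng[OF assms(1,4)] by blast+
  moreover have "x \<in> Y" "y \<in> X"
    using assms(2,4,7) X Y by auto
  moreover have "Y \<noteq> {x}" "X \<noteq> {y}"
    using removable_singleton assms(3,5) calculation(1,2) by blast+
  ultimately obtain x' y' where x': "x' \<noteq> x" "Y = {x, x'}" "compl_rows M x x'"
    and y': "y' \<noteq> y" "X = {y, y'}" "compl_rows M y y'"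
    using removable_pair_through[OF assms(5)] removable_pair_through[OF assms(3)] by metis
  have "same_row M y x \<or> compl_rows M y x"
    using admissible_with_dst[OF assms(2,4)] \<open>\<not> trivial_row M x\<close> by (auto simp: admissible_def)
  then show ?thesis
    using joinable_crossed_pairs[OF assms(1,4) _ _ _ x'(3) y'(3)] assms(6) X Y x' y' by auto
qed

lemma joinable_disjoint:
  assumes "is_sbm M" "admissible M x" "removable M x X" "admissible M y" "removable M y Y"
    "X \<inter> Y = {}"
  shows "joinable (del_elems (with_dst M x) X) (del_elems (with_dst M y) Y)"
proof (cases "\<exists>z. admissible M z \<and> z \<notin> X \<and> z \<notin> Y")
  case True
  then obtain z where z: "admissible M z" "z \<notin> X" "z \<notin> Y" by blast
  have "reduces_to (del_elems (with_dst M x) X) (del_elems (with_dst M z) (X \<union> Y))"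
    using reduces_to_switch_and_delete[OF assms(1-3) z(1,2) removable_other[OF assms(5) z(3)]]
      assms(6) by blast
  moreover have "reduces_to (del_elems (with_dst M y) Y) (del_elems (with_dst M z) (X \<union> Y))"
    using reduces_to_switch_and_delete[OF assms(1,4,5) z(1,3) removable_other[OF assms(3) z(2)]]
      assms(6) by (simp add: Un_commute Int_commute)
  ultimately show ?thesis
    by (auto simp: joinable_def)
next
  case False
  then show ?thesis
    using joinable_disjoint_blocked[OF assms] by blast
qed

lemma joinable_overlapping:
  assumes "is_sbm M" "admissible M x" "removable M x X" "admissible M y" "removable M y Y"
    "g \<in> X" "g \<in> Y" "X \<noteq> Y"
  shows "joinable (del_elems (with_dst M x) X) (del_elems (with_dst M y) Y)"
proof -
  consider (single_pair) "X = {g}" "Y \<noteq> {g}" | (pair_single) "Y = {g}" "X \<noteq> {g}"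
    | (pairs) "X \<noteq> {g}" "Y \<noteq> {g}"
    using assms(8) by blast
  then show ?thesis
  proof cases
    case single_pair
    then show ?thesis
      using joinable_single_in_pair[OF assms(1,2) _ assms(4)] removable_pair_through[OF assms(5,7)]
        removable_singleton assms(3,5) by metis
  next
    case pair_single
    then show ?thesis
      using joinable_single_in_pair[OF assms(1,4) _ assms(2)] removable_pair_through[OF assms(3,6)]
        removable_singleton assms(3,5) joinable_sym by metis
  next
    case pairs
    obtain h1 h2 where "h1 \<noteq> g" "X = {g, h1}" "compl_rows M g h1"
      "h2 \<noteq> g" "Y = {g, h2}" "compl_rows M g h2"
      using removable_pair_through[OF assms(3,6) pairs(1)] removable_pair_through[OF assms(5,7) pairs(2)]
      by blast
    then show ?thesis
      using joinable_overlapping_pairs[OF assms(1,2) _ assms(4)] assms(3,5,8)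
      by (auto intro: joinable_reduces_to)
  qed
qed

lemma reduces_local_confluent:
  assumes "reduces M A" "reduces M B"
  shows "joinable A B"
proof -
  obtain x X y Y where M: "is_sbm M" and x: "admissible M x" "removable M x X"
    and y: "admissible M y" "removable M y Y"
    and AB: "A = del_elems (with_dst M x) X" "B = del_elems (with_dst M y) Y"
    using assms by (auto simp: reduces_def)
  consider (disjoint) "X \<inter> Y = {}" | (equal) "X = Y" | (overlap) g where "g \<in> X" "g \<in> Y" "X \<noteq> Y"
    by blast
  then show ?thesis
  proof cases
    case disjoint
    then show ?thesis
      using joinable_disjoint[OF M x y] AB by simp
  next
    case equal
    then have "adm_switch A B"
      using adm_switch_del_elems[OF M x(1) y(1)] removableD[OF x(2)] removableD[OF y(2)] AB by simp
    then show ?thesis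
      by (intro joinable_reduces_to reduces_to_adm_switch)
  next
    case overlap
    then show ?thesis
      using joinable_overlapping[OF M x y] AB by simp
  qed
qed

section \<open>Uniqueness of irreducible forms\<close>

lemma reduces_image:
  assumes "sbm_iso M M'" "reduces M A"
  shows "\<exists>A'. reduces M' A' \<and> sbm_iso A A'"
proof -
  obtain f where f: "bij_betw f (grd M) (grd M')" "f (sng M) = sng M'" "f (dst M) = dst M'"
    "\<And>x y. x \<in> grd M \<Longrightarrow> y \<in> grd M \<Longrightarrow> frm M' (f x) (f y) = frm M x y" "is_sbm M" "is_sbm M'"
    using sbm_isoE[OF assms(1)] by metis
  obtain x X where x: "admissible M x" "removable M x X" "A = del_elems (with_dst M x) X"
    using assms(2) by (auto simp: reduces_def)
  have "x \<in> grd M"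
    using x(1) by (rule admissible_in_grd)
  then have "reduces M' (del_elems (with_dst M' (f x)) (f ` X))"
    unfolding reduces_def
    using f(6) admissible_image[OF f(1,2,4,5,3) x(1)] removable_image[OF f(1,2,4,5) _ x(2)] by blast
  moreover have "sbm_iso A (del_elems (with_dst M' (f x)) (f ` X))"
    using sbm_iso_image[OF f(1,2,4,5,6) \<open>x \<in> grd M\<close>] removableD[OF x(2)] x(3) by simp
  ultimately show ?thesis
    by blast
qed

lemma reduces_adm_switch:
  assumes "adm_switch M M'" "reduces M' B"
  shows "reduces M B"
proof -
  obtain z where z: "is_sbm M" "admissible M z" "M' = with_dst M z"
    using assms(1) by (auto simp: adm_switch_def)
  obtain x X where x: "admissible M' x" "removable M' x X" "B = del_elems (with_dst M' x) X"
    using assms(2) by (auto simp: reduces_def)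
  have "admissible M x"
    using admissible_with_dstD[OF z(1,2)] x(1) z(3) by simp
  then show ?thesis
    unfolding reduces_def using z x by auto
qed

lemma switch_step_reduces:
  assumes "switch_step M M'" "reduces M' B"
  shows "\<exists>A. reduces M A \<and> reduces_to A B"
  using assms reduces_image[OF sbm_iso_sym] reduces_adm_switch reduces_to_refl
  unfolding switch_step_def by (meson reduces_to_sbm_iso sbm_iso_sym)

lemma switch_equiv_reduces:
  assumes "switch_equiv M M'" "reduces M' B"
  shows "\<exists>A. reduces M A \<and> reduces_to A B"
  using assms
proof (induction arbitrary: B rule: rtranclp_induct)
  case base
  then show ?case using reduces_to_refl by blast
next
  case (step y z)
  then show ?case
    using switch_step_reduces reduces_to_trans by meson
qed

lemma irreducible_switch_equiv: "irreducible N \<Longrightarrow> switch_equiv N N' \<Longrightarrow> irreducible N'"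
  unfolding irreducible_def using switch_equiv_reduces switch_equiv_is_sbm by blast

text \<open>Every rewrite sequence can be reordered so that its reductions come first: switch steps
  commute with reductions.\<close>

lemma reduces_to_cases:
  "reduces_to M N \<Longrightarrow> switch_equiv M N \<or> (\<exists>A. reduces M A \<and> reduces_to A N)"
  unfolding reduces_to_def
proof (induction rule: converse_rtranclp_induct)
  case (step y z)
  show ?case
  proof (cases "reduces y z")
    case True
    then show ?thesis using step(2) by (auto simp: reduces_to_def)
  next
    case False
    then have "switch_step y z" using step(1) by simp
    with step(3) show ?thesis
      using switch_step_reduces reduces_to_trans
      by (metis converse_rtranclp_into_rtranclp reduces_to_def)
  qed
qed simp

lemma irreducible_reduces_to: "irreducible M \<Longrightarrow> reduces_to M N \<Longrightarrow> switch_equiv M N"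
  using reduces_to_cases unfolding irreducible_def by blast

lemma irreducible_form_exists: "is_sbm M \<Longrightarrow> \<exists>N. irreducible N \<and> reduces_to M N"
proof (induction "card (grd M)" arbitrary: M rule: less_induct)
  case less
  show ?case
  proof (cases "irreducible M")
    case False
    then obtain A where A: "reduces M A"
      using less(2) by (auto simp: irreducible_def)
    then obtain N where "irreducible N" "reduces_to A N"
      using less(1)[OF reduces_card_less[OF A]] reduces_is_sbm[OF A] by blast
    then show ?thesis
      using A reduces_to_reduces reduces_to_trans by blast
  qed (use reduces_to_refl in blast)
qed

text \<open>Newman's lemma, modulo the switch equivalence.\<close>

theorem irreducible_form_unique:
  "is_sbm M \<Longrightarrow> reduces_to M N1 \<Longrightarrow> irreducible N1 \<Longrightarrow> reduces_to M N2 \<Longrightarrow> irreducible N2 \<Longrightarrow>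
    switch_equiv N1 N2"
proof (induction "card (grd M)" arbitrary: M N1 N2 rule: less_induct)
  case less
  show ?case
  proof (cases "switch_equiv M N1 \<or> switch_equiv M N2")
    case True
    then have "irreducible M"
      using less(4,6) irreducible_switch_equiv switch_equiv_sym by blast
    then have "switch_equiv M N1" "switch_equiv M N2"
      using irreducible_reduces_to less(3,5) by blast+
    then show ?thesis
      using switch_equiv_sym rtranclp_trans by metis
  next
    case False
    then obtain A B where A: "reduces M A" "reduces_to A N1" and B: "reduces M B" "reduces_to B N2"
      using reduces_to_cases[OF less(3)] reduces_to_cases[OF less(5)] by blast
    obtain C where C: "reduces_to A C" "reduces_to B C"
      using reduces_local_confluent[OF A(1) B(1)] by (auto simp: joinable_def)
    have AB: "is_sbm A" "is_sbm B"
      using reduces_is_sbm A B by auto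
    obtain N0 where N0: "irreducible N0" "reduces_to C N0"
      using irreducible_form_exists reduces_to_is_sbm[OF C(1) AB(1)] by blast
    have "switch_equiv N1 N0"
      using less(1)[OF reduces_card_less[OF A(1)] AB(1) A(2) less(4) reduces_to_trans[OF C(1) N0(2)] N0(1)] .
    moreover have "switch_equiv N2 N0"
      using less(1)[OF reduces_card_less[OF B(1)] AB(2) B(2) less(6) reduces_to_trans[OF C(2) N0(2)] N0(1)] .
    ultimately show ?thesis
      using switch_equiv_sym rtranclp_trans by metis
  qed
qed

section \<open>Reductions and homology\<close>

lemma adm_switch_sing_switch:
  assumes "sing_switch M M'"
  shows "adm_switch M M'"
proof -
  obtain g where g: "is_sbm M" "g \<in> grd M"
    "\<forall>h\<in>grd M. frm M g h + frm M (dst M) h = frm M (sng M) h" "M' = M\<lparr>dst := g\<rparr>"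
    using assms by (auto simp: sing_switch_def)
  then have "admissible M g"
    by (simp add: admissible_def compl_rows_def)
  then show ?thesis
    using g by (auto simp: adm_switch_def with_dst_def)
qed

lemma switch_equiv_switch_rel: "switch_rel M1 M \<Longrightarrow> switch_equiv M1 M"
  unfolding switch_rel_def
  by (induction rule: rtranclp_induct)
    (auto simp: switch_step_def dest: adm_switch_sing_switch intro: rtranclp.rtrancl_into_rtrancl)

lemma elem_ext_removable:
  assumes "is_sbm M" "removable M (dst M) X"
  shows "elem_ext (del_elems M X) M"
proof -
  have X: "X \<subseteq> grd M" "sng M \<notin> X" "dst M \<notin> X"
    using assms(2) by (auto simp: removable_def)
  then have sbm: "is_sbm (del_elems M X)"
    using is_sbm_del_elems_with_dst[OF assms(1), of "dst M"] assms(1) by (simp add: is_sbm_def)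
  consider (zero) g where "X = {g}" "zero_row M g" | (sng) g where "X = {g}" "sng_row M g"
    | (pair) g1 g2 where "g1 \<noteq> g2" "X = {g1, g2}" "compl_rows M g1 g2"
    using assms(2) by (auto elim: removable_cases)
  then show ?thesis
  proof cases
    case zero
    then have "move1 (del_elems M X) M"
      using sbm assms(1) X by (auto simp: move1_def zero_row_def extends_on_def)
    then show ?thesis by (simp add: elem_ext_def)
  next
    case sng
    then have "move2 (del_elems M X) M"
      using sbm assms(1) X by (auto simp: move2_def sng_row_def extends_on_def)
    then show ?thesis by (simp add: elem_ext_def)
  next
    case pair
    then have "move3 (del_elems M X) M"
      using sbm assms(1) X unfolding move3_def compl_rows_def extends_on_def
      by (intro conjI exI[of _ g1] exI[of _ g2]) auto
    then show ?thesis by (simp add: elem_ext_def)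
  qed
qed

lemma elem_ext_removable_set:
  assumes "elem_ext A M"
  obtains X where "removable M (dst M) X" "grd M - X = grd A"
proof -
  have sd: "sng M = sng A" "dst M = dst A" "sng A \<in> grd A" "dst A \<in> grd A"
    using assms by (auto simp: elem_ext_def move1_def move2_def move3_def is_sbm_def)
  from assms show ?thesis
  proof (unfold elem_ext_def, elim disjE)
    assume "move1 A M"
    then obtain g where "g \<notin> grd A" "grd M = insert g (grd A)" "\<forall>h\<in>grd M. frm M g h = 0"
      by (auto simp: move1_def)
    then show ?thesis
      using that[of "{g}"] sd by (auto simp: removable_def zero_row_def)
  next
    assume "move2 A M"
    then obtain g where "g \<notin> grd A" "grd M = insert g (grd A)"
      "\<forall>h\<in>grd M. frm M g h = frm M (sng A) h"
      by (auto simp: move2_def)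
    then show ?thesis
      using that[of "{g}"] sd by (auto simp: removable_def sng_row_def)
  next
    assume "move3 A M"
    then obtain gi gj where "gi \<notin> grd A" "gj \<notin> grd A" "gi \<noteq> gj"
      "grd M = insert gi (insert gj (grd A))" "\<forall>h\<in>grd M. frm M gi h + frm M gj h = frm M (sng A) h"
      by (auto simp: move3_def)
    then show ?thesis
      using that[of "{gi, gj}"] sd by (auto simp: removable_def compl_rows_def)
  qed
qed

lemma elem_ext_reduces:
  assumes "elem_ext A M"
  shows "\<exists>B. reduces M B \<and> sbm_iso B A"
proof -
  have A: "is_sbm A" and M: "is_sbm M" and sd: "sng M = sng A" "dst M = dst A"
    and ext: "extends_on (grd A) (frm A) (frm M)"
    using assms by (auto simp: elem_ext_def move1_def move2_def move3_def)
  obtain X where X: "removable M (dst M) X" "grd M - X = grd A"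
    using elem_ext_removable_set[OF assms] .
  then have red: "reduces M (del_elems M X)"
    unfolding reduces_def using M admissible_dst[OF M] by (metis with_dst_simps(6))
  then have "sbm_iso (del_elems M X) A"
    unfolding sbm_iso_def using reduces_is_sbm A sd X(2) ext
    by (auto simp: extends_on_def intro!: exI[of _ id])
  then show ?thesis
    using red by blast
qed

lemma irreducible_primitive:
  assumes "irreducible N"
  shows "primitive N"
  unfolding primitive_def
proof (intro conjI notI)
  show "is_sbm N"
    using assms by (simp add: irreducible_def)
next
  assume "\<exists>M0 M1. elem_ext M0 M1 \<and> (switch_rel M1 N \<or> sbm_iso M1 N)"
  then obtain M0 M1 where "elem_ext M0 M1" "switch_equiv N M1"
    by (meson r_into_rtranclp switch_equiv_switch_rel switch_equiv_sym switch_step_def)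
  then show False
    using elem_ext_reduces switch_equiv_reduces assms by (metis irreducible_def)
qed

abbreviation hom_steps :: "('h::ab_group_add) sbm \<Rightarrow> 'h sbm \<Rightarrow> bool" where
  "hom_steps \<equiv> hom_step\<^sup>*\<^sup>*"

lemma hom_step_sym: "hom_step M M' \<Longrightarrow> hom_step M' M"
  by (auto simp: hom_step_def intro: sbm_iso_sym)

lemma hom_steps_sym: "hom_steps M M' \<Longrightarrow> hom_steps M' M"
proof (induction rule: rtranclp_induct)
  case (step y z)
  then show ?case
    by (meson converse_rtranclp_into_rtranclp hom_step_sym)
qed simp

lemma hom_step_is_sbm: "hom_step M M' \<Longrightarrow> is_sbm M \<and> is_sbm M'"
  by (auto simp: hom_step_def sbm_iso_def elem_ext_def move1_def move2_def move3_def
      dest!: adm_switch_sing_switch adm_switch_is_sbm)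

lemma hom_step_compl_dst:
  "is_sbm X \<Longrightarrow> g \<in> grd X \<Longrightarrow> compl_rows X g (dst X) \<Longrightarrow> hom_step X (with_dst X g)"
  by (auto simp: hom_step_def sing_switch_def compl_rows_def with_dst_def)

text \<open>In the presence of a zero row a, every trivial row can be reached from the singular row
  by singularity switches, via a when the row equals that of s.\<close>

lemma hom_steps_to_sng_via_zero_row:
  assumes "is_sbm X" "a \<in> grd X" "zero_row X a" "trivial_row X (dst X)"
  shows "hom_steps X (with_dst X (sng X))"
proof -
  have s: "sng X \<in> grd X"
    using assms(1) by (simp add: is_sbm_def)
  show ?thesis
  proof (cases "zero_row X (dst X)")
    case True
    then show ?thesis
      using hom_step_compl_dst[OF assms(1) s] zero_sng_compl_rows sng_row_sng by blast
  next
    case False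
    then have "compl_rows X a (dst X)"
      using assms(3,4) sng_zero_compl_rows by blast
    then have "hom_step X (with_dst X a)"
      using hom_step_compl_dst[OF assms(1,2)] by blast
    moreover have "hom_step (with_dst X a) (with_dst X (sng X))"
      using hom_step_compl_dst[OF is_sbm_with_dst[OF assms(1,2)], of "sng X"] s
        zero_sng_compl_rows[OF assms(3) sng_row_sng] by simp
    ultimately show ?thesis
      by auto
  qed
qed

lemma hom_steps_trivial_switch_via_zero_row:
  assumes "is_sbm X" "a \<in> grd X" "zero_row X a" "trivial_row X (dst X)" "z \<in> grd X"
    "trivial_row X z"
  shows "hom_steps X (with_dst X z)"
proof -
  have "hom_steps (with_dst X z) (with_dst X (sng X))"
    using hom_steps_to_sng_via_zero_row[OF is_sbm_with_dst[OF assms(1,5)]] assms(2,3,6) by simp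
  then show ?thesis
    using hom_steps_to_sng_via_zero_row[OF assms(1-4)] hom_steps_sym rtranclp_trans by metis
qed

definition add_zero_row :: "('h::ab_group_add) sbm \<Rightarrow> nat \<Rightarrow> 'h sbm" where
  "add_zero_row M a =
     M\<lparr>grd := insert a (grd M), frm := (\<lambda>x y. if x = a \<or> y = a then 0 else frm M x y)\<rparr>"

lemma move1_add_zero_row:
  assumes "is_sbm M" "a \<notin> grd M"
  shows "move1 M (add_zero_row M a)"
proof -
  have "skew_on (insert a (grd M)) (\<lambda>x y. if x = a \<or> y = a then 0 else frm M x y)"
    unfolding skew_on_def
  proof (intro ballI)
    fix x y
    assume "x \<in> insert a (grd M)" "y \<in> insert a (grd M)"
    then have "x \<noteq> a \<Longrightarrow> y \<noteq> a \<Longrightarrow> frm M x y = - frm M y x"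
      using assms(1) unfolding is_sbm_def skew_on_def by blast
    then show "(if x = a \<or> y = a then 0 else frm M x y) = - (if y = a \<or> x = a then 0 else frm M y x)"
      by auto
  qed
  then show ?thesis
    using assms unfolding move1_def add_zero_row_def extends_on_def is_sbm_def by auto
qed

lemma hom_steps_trivial_switch:
  assumes M: "is_sbm M" and z: "z \<in> grd M" "trivial_row M z" and d: "trivial_row M (dst M)"
  shows "hom_steps M (with_dst M z)"
proof -
  obtain a where a: "a \<notin> grd M"
    using M by (meson ex_new_if_finite infinite_UNIV_nat is_sbm_def)
  let ?Ma = "add_zero_row M a"
  have dz: "dst M \<in> grd M" "z \<in> grd M" "sng M \<in> grd M"
    using M z by (auto simp: is_sbm_def)
  have step_in: "hom_step M ?Ma"
    using move1_add_zero_row[OF M a] by (simp add: hom_step_def elem_ext_def)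
  have "with_dst ?Ma z = add_zero_row (with_dst M z) a"
    by (rule sbm.equality) (simp_all add: add_zero_row_def with_dst_def fun_eq_iff)
  then have step_out: "hom_step (with_dst ?Ma z) (with_dst M z)"
    using move1_add_zero_row[OF is_sbm_with_dst[OF M z(1)]] a
    by (simp add: hom_step_def elem_ext_def)
  have trivial: "trivial_row ?Ma x" if "x \<in> grd M" "trivial_row M x" for x
    using that a dz by (auto simp: zero_row_def sng_row_def add_zero_row_def)
  have "hom_steps ?Ma (with_dst ?Ma z)"
    using hom_steps_trivial_switch_via_zero_row[of ?Ma a z] move1_add_zero_row[OF M a]
      trivial[OF dz(1) d] trivial[OF z] dz
    by (auto simp: move1_def zero_row_def add_zero_row_def)
  then show ?thesis
    using step_in step_out
    by (meson converse_rtranclp_into_rtranclp rtranclp.rtrancl_into_rtrancl)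
qed

lemma hom_steps_adm_switch:
  assumes "adm_switch M M'"
  shows "hom_steps M M'"
proof -
  obtain z where z: "is_sbm M" "admissible M z" "M' = with_dst M z"
    using assms by (auto simp: adm_switch_def)
  have zd: "z \<in> grd M" "dst M \<in> grd M"
    using z(1,2) by (auto simp: admissible_def is_sbm_def)
  consider (same) "same_row M z (dst M)" | (compl) "compl_rows M z (dst M)"
    | (trivial) "trivial_row M (dst M)" "trivial_row M z"
    using z(2) by (auto simp: admissible_def)
  then show ?thesis
  proof cases
    case compl
    then show ?thesis
      using hom_step_compl_dst[OF z(1) zd(1)] z(3) by auto
  next
    case trivial
    then show ?thesis
      using hom_steps_trivial_switch[OF z(1) zd(1)] z(3) by auto
  next
    case same
    show ?thesis
    proof (cases "z \<noteq> sng M \<and> dst M \<noteq> sng M")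
      case True
      then have "sbm_iso M (with_dst M z)"
        using sbm_iso_with_dst_same_row[OF z(1) zd(2,1) same_row_sym[OF same]] by simp
      then show ?thesis
        using z(3) by (auto simp: hom_step_def)
    next
      case False
      then have "trivial_row M (dst M)" "trivial_row M z"
        using same by (auto simp: sng_row_def same_row_def)
      then show ?thesis
        using hom_steps_trivial_switch[OF z(1) zd(1)] z(3) by auto
    qed
  qed
qed

lemma hom_steps_reduces_to: "reduces_to M N \<Longrightarrow> hom_steps M N"
  unfolding reduces_to_def
proof (induction rule: rtranclp_induct)
  case (step y w)
  have "hom_steps y w"
  proof (cases "switch_step y w")
    case True
    then show ?thesis
      by (auto simp: switch_step_def hom_step_def dest: hom_steps_adm_switch)
  next
    case False
    then obtain x X where x: "is_sbm y" "admissible y x" "removable y x X"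
      "w = del_elems (with_dst y x) X"
      using step(2) by (auto simp: reduces_def)
    have "hom_steps y (with_dst y x)"
      using hom_steps_adm_switch x by (auto simp: adm_switch_def)
    moreover have "hom_step (with_dst y x) w"
      using elem_ext_removable[OF is_sbm_with_dst[OF x(1) admissible_in_grd[OF x(2)]]] x
      by (simp add: hom_step_def)
    ultimately show ?thesis
      by (rule rtranclp.rtrancl_into_rtrancl)
  qed
  then show ?case
    using step(3) by auto
qed simp

lemma hom_step_irreducible_forms:
  assumes "hom_step Y Y'" "irreducible N" "reduces_to Y N" "irreducible N'" "reduces_to Y' N'"
  shows "switch_equiv N N'"
proof -
  have Y: "is_sbm Y" "is_sbm Y'"
    using hom_step_is_sbm[OF assms(1)] by auto
  have "reduces_to Y Y' \<or> reduces_to Y' Y"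
    using assms(1) unfolding hom_step_def
    by (auto intro: reduces_to_sbm_iso reduces_to_adm_switch adm_switch_sing_switch
        dest!: elem_ext_reduces intro: reduces_to_trans reduces_to_reduces)
  then show ?thesis
  proof
    assume "reduces_to Y Y'"
    then show ?thesis
      using irreducible_form_unique[OF Y(1) assms(3,2)] reduces_to_trans assms(4,5) by blast
  next
    assume "reduces_to Y' Y"
    then show ?thesis
      using irreducible_form_unique[OF Y(2) _ assms(2) assms(5,4)] reduces_to_trans assms(3) by blast
  qed
qed

lemma homologous_irreducible_forms:
  assumes "homologous M Q" "irreducible N" "reduces_to M N" "irreducible N'" "reduces_to Q N'"
  shows "switch_equiv N N'"
proof -
  have "hom_steps M Q" "is_sbm M"
    using assms(1) by (auto simp: homologous_def)
  then have "\<forall>N'. irreducible N' \<and> reduces_to Q N' \<longrightarrow> switch_equiv N N'"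
  proof (induction rule: rtranclp_induct)
    case base
    then show ?case using irreducible_form_unique assms(2,3) by blast
  next
    case (step y w)
    obtain Ny where "irreducible Ny" "reduces_to y Ny"
      using irreducible_form_exists hom_step_is_sbm[OF step(2)] by blast
    then show ?case
      using step(3)[OF step(4)] hom_step_irreducible_forms[OF step(2)] by (meson rtranclp_trans)
  qed
  then show ?thesis
    using assms(4,5) by blast
qed

lemma primitive_switch_no_removable_dst:
  assumes "primitive Q" "switch_rel M1 Q \<or> sbm_iso M1 Q" "is_sbm M1" "removable M1 (dst M1) Y"
  shows False
  using assms elem_ext_removable[OF assms(3,4)] unfolding primitive_def by blast

lemma primitive_no_removable_dst: "primitive Q \<Longrightarrow> \<not> removable Q (dst Q) Y"
  using primitive_switch_no_removable_dst[of Q Q] by (auto simp: switch_rel_def primitive_def)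

lemma primitive_no_removable_compl:
  assumes "primitive Q" "p \<in> grd Q" "compl_rows Q p (dst Q)"
  shows "\<not> removable Q p Y"
proof
  assume removable: "removable Q p Y"
  have Q: "is_sbm Q" "dst Q \<in> grd Q"
    using assms(1) by (auto simp: primitive_def is_sbm_def)
  have Qp: "is_sbm (with_dst Q p)"
    using is_sbm_with_dst[OF Q(1) assms(2)] .
  have "sing_switch (with_dst Q p) Q"
    unfolding sing_switch_def using Qp Q(2) compl_rows_sym[OF assms(3)]
    by (auto simp: compl_rows_def with_dst_def intro!: bexI[of _ "dst Q"])
  then have "switch_rel (with_dst Q p) Q"
    unfolding switch_rel_def using Qp Q(1) by auto
  then show False
    using primitive_switch_no_removable_dst[OF assms(1) _ Qp] removable by simp
qed

lemma primitive_no_removable_same_row: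
  assumes "primitive Q" "p \<in> grd Q" "same_row Q p (dst Q)" "p \<noteq> sng Q" "dst Q \<noteq> sng Q"
  shows "\<not> removable Q p Y"
proof
  assume removable: "removable Q p Y"
  have Q: "is_sbm Q" "dst Q \<in> grd Q"
    using assms(1) by (auto simp: primitive_def is_sbm_def)
  have "sbm_iso (with_dst Q p) Q"
    using sbm_iso_with_dst_same_row[OF Q(1) assms(2) Q(2) assms(3-5)] by simp
  then show False
    using primitive_switch_no_removable_dst[OF assms(1) _ is_sbm_with_dst[OF Q(1) assms(2)]] removable
    by simp
qed

text \<open>Deleting the second distinguished element when its row is that of s: the inverse of the
  move M2 after switching d to s.\<close>

definition drop_dst :: "('h::ab_group_add) sbm \<Rightarrow> 'h sbm" where
  "drop_dst Q = del_elems (with_dst Q (sng Q)) {dst Q}"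

lemma drop_dst_simps [simp]:
  "grd (drop_dst Q) = grd Q - {dst Q}" "sng (drop_dst Q) = sng Q" "dst (drop_dst Q) = sng Q"
  "frm (drop_dst Q) = frm Q"
  by (simp_all add: drop_dst_def)

lemma primitive_reduction_trivial_rows:
  assumes "primitive Q" "admissible Q x" "removable Q x X"
  shows "trivial_row Q (dst Q) \<and> trivial_row Q x"
proof -
  have x: "x \<in> grd Q"
    using assms(2) by (rule admissible_in_grd)
  consider (same) "same_row Q x (dst Q)" | (compl) "compl_rows Q x (dst Q)"
    | (trivial) "trivial_row Q (dst Q) \<and> trivial_row Q x"
    using assms(2) by (auto simp: admissible_def)
  then show ?thesis
  proof cases
    case same
    then have "x = sng Q \<or> dst Q = sng Q"
      using primitive_no_removable_same_row[OF assms(1) x] assms(3) by blast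
    then show ?thesis
      using same by (auto simp: same_row_def sng_row_def)
  next
    case compl
    then show ?thesis
      using primitive_no_removable_compl[OF assms(1) x] assms(3) by blast
  qed
qed

lemma primitive_reduction_at_sng:
  assumes "primitive Q" "admissible Q x" "removable Q x X"
  shows "x = sng Q \<and> dst Q \<noteq> sng Q \<and> sng_row Q (dst Q)"
proof -
  let ?d = "dst Q" and ?s = "sng Q"
  have Q: "?s \<in> grd Q" "?d \<in> grd Q"
    using assms(1) by (auto simp: primitive_def is_sbm_def)
  have no_d: "\<And>Y. \<not> removable Q ?d Y"
    using primitive_no_removable_dst[OF assms(1)] .
  have trivial: "trivial_row Q ?d" "trivial_row Q x"
    using primitive_reduction_trivial_rows[OF assms] by auto
  have "x \<noteq> ?d"
    using no_d assms(3) by auto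
  moreover have "x = ?s"
  proof (rule ccontr)
    assume "x \<noteq> ?s"
    then have "removable Q ?d {x}"
      using trivial admissible_in_grd[OF assms(2)] \<open>x \<noteq> ?d\<close> by (auto simp: removable_def)
    then show False
      using no_d by blast
  qed
  moreover have "sng_row Q ?d"
  proof (rule ccontr)
    assume "\<not> sng_row Q ?d"
    then have "removable Q ?s {?d}" "compl_rows Q ?s ?d"
      using trivial \<open>x \<noteq> ?d\<close> \<open>x = ?s\<close> Q zero_sng_compl_rows sng_row_sng
      by (auto simp: removable_def)
    then show False
      using primitive_no_removable_compl[OF assms(1) Q(1)] by blast
  qed
  ultimately show ?thesis
    by simp
qed

lemma primitive_reduces:
  assumes "primitive Q" "reduces Q A"
  shows "dst Q \<noteq> sng Q \<and> sng_row Q (dst Q) \<and> A = drop_dst Q"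
proof -
  let ?d = "dst Q"
  obtain x X where x: "admissible Q x" "removable Q x X" "A = del_elems (with_dst Q x) X"
    using assms(2) by (auto simp: reduces_def)
  have at_sng: "x = sng Q" "?d \<noteq> sng Q" "sng_row Q ?d"
    using primitive_reduction_at_sng[OF assms(1) x(1,2)] by auto
  have no_d: "\<And>Y. \<not> removable Q ?d Y"
    using primitive_no_removable_dst[OF assms(1)] .
  then have "?d \<in> X"
    using removable_other[OF x(2)] by blast
  have "X = {?d}"
  proof (rule ccontr)
    assume "X \<noteq> {?d}"
    then obtain q where q: "q \<noteq> ?d" "X = {?d, q}" "compl_rows Q ?d q"
      using removable_pair_through[OF x(2) \<open>?d \<in> X\<close>] by blast
    then have "removable Q ?d {q}"
      using compl_rows_sng_row[OF compl_rows_sym[OF q(3)] at_sng(3)] x(2)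
      by (auto simp: removable_def)
    then show False
      using no_d by blast
  qed
  then show ?thesis
    using at_sng x(3) by (simp add: drop_dst_def)
qed

lemma reduces_drop_dst:
  assumes "is_sbm Q" "dst Q \<noteq> sng Q" "sng_row Q (dst Q)"
  shows "reduces Q (drop_dst Q)"
proof -
  have "sng Q \<in> grd Q" "dst Q \<in> grd Q"
    using assms(1) by (auto simp: is_sbm_def)
  then have "admissible Q (sng Q)" "removable Q (sng Q) {dst Q}"
    using assms(2,3) sng_row_sng by (auto simp: admissible_def removable_def)
  then show ?thesis
    using assms(1) by (auto simp: reduces_def drop_dst_def)
qed

text \<open>When d has the row of s it also has the column of s, so rows of the matrix without d
  determine rows of the full matrix.\<close>

lemma frm_dst_to_sng:
  assumes "is_sbm Q" "sng_row Q (dst Q)" "x \<in> grd Q" "y \<in> grd Q"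
  shows "frm Q x y = frm Q (if x = dst Q then sng Q else x) (if y = dst Q then sng Q else y)"
proof -
  have "dst Q \<in> grd Q" "sng Q \<in> grd Q"
    using assms(1) by (auto simp: is_sbm_def)
  then show ?thesis
    using assms sng_row_column[OF assms(1,2)] by (auto simp: sng_row_def)
qed

lemma drop_dst_column:
  assumes "is_sbm Q" "sng_row Q (dst Q)" "dst Q \<noteq> sng Q" "h \<in> grd Q"
  shows "\<exists>h'\<in>grd (drop_dst Q). \<forall>x\<in>grd Q. frm Q x h = frm Q x h'"
proof (cases "h = dst Q")
  case True
  moreover have "sng Q \<in> grd (drop_dst Q)"
    using assms(1,3) by (simp add: is_sbm_def)
  ultimately show ?thesis
    using sng_row_column[OF assms(1,2)] assms(1) by (auto simp: is_sbm_def)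
qed (use assms(4) in auto)

lemma rows_drop_dst:
  assumes "is_sbm Q" "sng_row Q (dst Q)" "dst Q \<noteq> sng Q"
  shows "y \<in> grd (drop_dst Q) \<Longrightarrow> zero_row (drop_dst Q) y \<Longrightarrow> zero_row Q y"
    and "y \<in> grd (drop_dst Q) \<Longrightarrow> sng_row (drop_dst Q) y \<Longrightarrow> sng_row Q y"
    and "y1 \<in> grd (drop_dst Q) \<Longrightarrow> y2 \<in> grd (drop_dst Q) \<Longrightarrow>
      compl_rows (drop_dst Q) y1 y2 \<Longrightarrow> compl_rows Q y1 y2"
proof -
  have s: "sng Q \<in> grd (drop_dst Q)"
    using assms(1,3) by (simp add: is_sbm_def)
  note column = drop_dst_column[OF assms]
  show "zero_row Q y" if "y \<in> grd (drop_dst Q)" "zero_row (drop_dst Q) y"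
    using that column by (fastforce simp: zero_row_def)
  show "sng_row Q y" if "y \<in> grd (drop_dst Q)" "sng_row (drop_dst Q) y"
    using that column s by (fastforce simp: sng_row_def)
  show "compl_rows Q y1 y2"
    if "y1 \<in> grd (drop_dst Q)" "y2 \<in> grd (drop_dst Q)" "compl_rows (drop_dst Q) y1 y2"
    using that column s by (fastforce simp: compl_rows_def)
qed

lemma removable_drop_dst:
  assumes "is_sbm Q" "sng_row Q (dst Q)" "dst Q \<noteq> sng Q" "removable (drop_dst Q) x Y"
  shows "removable Q (dst Q) Y"
proof -
  have Y: "Y \<subseteq> grd Q - {dst Q}" "sng Q \<notin> Y"
    using assms(4) by (auto simp: removable_def)
  from assms(4) show ?thesis
  proof (cases rule: removable_cases)
    case (1 g)
    then show ?thesis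
      using Y rows_drop_dst(1,2)[OF assms(1-3)] by (auto simp: removable_def)
  next
    case (2 g1 g2)
    then show ?thesis
      using Y rows_drop_dst(3)[OF assms(1-3)] by (auto simp: removable_def)
  qed
qed

lemma irreducible_drop_dst:
  assumes "primitive Q" "dst Q \<noteq> sng Q" "sng_row Q (dst Q)"
  shows "irreducible (drop_dst Q)"
proof -
  have Q: "is_sbm Q" "sng Q \<in> grd Q"
    using assms(1) by (auto simp: primitive_def is_sbm_def)
  have "is_sbm (drop_dst Q)"
    using is_sbm_del_elems_with_dst[OF Q(1) Q(2)] assms(2) by (simp add: drop_dst_def)
  moreover have "\<not> reduces (drop_dst Q) B" for B
    using removable_drop_dst[OF Q(1) assms(3,2)] primitive_no_removable_dst[OF assms(1)]
    by (auto simp: reduces_def)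
  ultimately show ?thesis
    by (simp add: irreducible_def)
qed

lemma bij_betw_extend_point:
  assumes "bij_betw f (A - {a}) (B - {b})" "a \<in> A" "b \<in> B"
  shows "bij_betw (\<lambda>x. if x = a then b else f x) A B"
proof -
  have "bij_betw (\<lambda>x. if x = a then b else f x) (A - {a}) (B - {b})"
    using assms(1) by (rule bij_betw_cong[THEN iffD1, rotated]) auto
  then show ?thesis
    using notIn_Un_bij_betw3[of a "A - {a}" "\<lambda>x. if x = a then b else f x" "B - {b}"] assms(2,3)
    by (simp add: insert_absorb)
qed

lemma sbm_iso_extend_dst:
  assumes "is_sbm Q" "dst Q \<noteq> sng Q" "sng_row Q (dst Q)"
    "is_sbm Q0" "sng_row Q0 (dst Q0)"
    "bij_betw f (grd Q - {dst Q}) (grd Q0 - {dst Q0})" "f (sng Q) = sng Q0"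
    "\<And>x y. x \<in> grd Q - {dst Q} \<Longrightarrow> y \<in> grd Q - {dst Q} \<Longrightarrow> frm Q0 (f x) (f y) = frm Q x y"
  shows "sbm_iso Q Q0"
proof -
  let ?d = "dst Q" and ?s = "sng Q" and ?dz = "dst Q0" and ?sz = "sng Q0"
  let ?c = "\<lambda>x. if x = ?d then ?s else x" and ?cz = "\<lambda>x. if x = ?dz then ?sz else x"
  have ds: "?s \<in> grd Q" "?d \<in> grd Q" "?sz \<in> grd Q0" "?dz \<in> grd Q0"
    using assms(1,4) by (auto simp: is_sbm_def)
  define F where "F x = (if x = ?d then ?dz else f x)" for x
  have bij: "bij_betw F (grd Q) (grd Q0)"
    unfolding F_def using bij_betw_extend_point[OF assms(6)] ds by blast
  have collapse: "?cz (F x) = f (?c x)" "?c x \<in> grd Q - {?d}" if "x \<in> grd Q" for x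
  proof -
    have "x \<noteq> ?d \<Longrightarrow> f x \<in> grd Q0 - {?dz}"
      using bij_betwE[OF assms(6)] that by blast
    then show "?cz (F x) = f (?c x)" "?c x \<in> grd Q - {?d}"
      using that assms(2,7) ds by (auto simp: F_def)
  qed
  have "frm Q0 (F x) (F y) = frm Q x y" if "x \<in> grd Q" "y \<in> grd Q" for x y
  proof -
    have "F x \<in> grd Q0" "F y \<in> grd Q0"
      using bij that by (simp_all add: bij_betwE)
    then have "frm Q0 (F x) (F y) = frm Q0 (?cz (F x)) (?cz (F y))"
      by (rule frm_dst_to_sng[OF assms(4,5)])
    also have "\<dots> = frm Q0 (f (?c x)) (f (?c y))"
      by (simp only: collapse(1)[OF that(1)] collapse(1)[OF that(2)])
    also have "\<dots> = frm Q (?c x) (?c y)"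
      using assms(8) collapse(2) that by blast
    also have "\<dots> = frm Q x y"
      by (rule frm_dst_to_sng[OF assms(1,3) that, symmetric])
    finally show ?thesis .
  qed
  moreover have "F ?s = ?sz" "F ?d = ?dz"
    using assms(2,7) by (simp_all add: F_def)
  ultimately show ?thesis
    unfolding sbm_iso_def using assms(1,4) bij by blast
qed

lemma sbm_iso_drop_dst_cancel:
  assumes "is_sbm Q" "dst Q \<noteq> sng Q" "sng_row Q (dst Q)" "is_sbm Q0" "sng_row Q0 (dst Q0)"
    "sbm_iso (drop_dst Q) (drop_dst Q0)"
  shows "sbm_iso Q Q0"
proof -
  obtain f where "bij_betw f (grd (drop_dst Q)) (grd (drop_dst Q0))"
    "f (sng (drop_dst Q)) = sng (drop_dst Q0)"
    "\<And>x y. x \<in> grd (drop_dst Q) \<Longrightarrow> y \<in> grd (drop_dst Q) \<Longrightarrow>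
      frm (drop_dst Q0) (f x) (f y) = frm (drop_dst Q) x y"
    using sbm_isoE[OF assms(6)] by blast
  then show ?thesis
    using sbm_iso_extend_dst[OF assms(1-5), of f] by simp
qed

lemma irreducible_trivial_row:
  assumes "irreducible N" "admissible N x" "g \<in> grd N" "trivial_row N g"
  shows "g = sng N \<or> g = x"
proof (rule ccontr)
  assume "\<not> (g = sng N \<or> g = x)"
  then have "removable N x {g}"
    using assms(3,4) by (auto simp: removable_def)
  then have "reduces N (del_elems (with_dst N x) {g})"
    using assms(1,2) by (auto simp: reduces_def irreducible_def)
  then show False
    using assms(1) by (auto simp: irreducible_def)
qed

lemma irreducible_adm_switch_cases:
  assumes "irreducible N" "admissible N z"
  shows "sbm_iso (with_dst N z) N \<or> (compl_rows N z (dst N) \<and> z \<noteq> sng N)"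
proof -
  have N: "is_sbm N" "dst N \<in> grd N" and z: "z \<in> grd N"
    using assms by (auto simp: irreducible_def is_sbm_def admissible_def)
  have refl: "z = dst N \<Longrightarrow> sbm_iso (with_dst N z) N"
    using sbm_iso_refl[OF N(1)] by simp
  have d_trivial: "trivial_row N (dst N) \<Longrightarrow> dst N = sng N \<or> dst N = z"
    using irreducible_trivial_row[OF assms N(2)] .
  have both_trivial: "trivial_row N (dst N) \<Longrightarrow> trivial_row N z \<Longrightarrow> z = dst N"
    using d_trivial irreducible_trivial_row[OF assms(1) admissible_dst[OF N(1)] z] by auto
  consider (same) "same_row N z (dst N)" | (compl) "compl_rows N z (dst N)"
    | (trivial) "trivial_row N (dst N)" "trivial_row N z"
    using assms(2) by (auto simp: admissible_def)
  then show ?thesis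
  proof cases
    case same
    have "trivial_row N z \<and> trivial_row N (dst N)" if "z = sng N \<or> dst N = sng N"
      using same that by (auto simp: same_row_def sng_row_def)
    then show ?thesis
      using sbm_iso_with_dst_same_row[OF N(1) z N(2) same, simplified] both_trivial refl by blast
  next
    case compl
    then have "z = sng N \<Longrightarrow> zero_row N (dst N)"
      by (simp add: compl_rows_def zero_row_def)
    then have "z = sng N \<Longrightarrow> z = dst N"
      using d_trivial by auto
    then show ?thesis
      using compl refl by blast
  next
    case trivial
    then show ?thesis
      using both_trivial refl by blast
  qed
qed

lemma irreducible_adm_switch_pair:
  assumes "irreducible N" "admissible N z" "admissible N w"
  shows "sbm_iso (with_dst N z) N \<or> sbm_iso (with_dst N w) N \<or>
    sbm_iso (with_dst N z) (with_dst N w)"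
proof (rule ccontr)
  assume no_iso: "\<not> ?thesis"
  then have "compl_rows N z (dst N)" "z \<noteq> sng N" "compl_rows N w (dst N)" "w \<noteq> sng N"
    using irreducible_adm_switch_cases[OF assms(1,2)] irreducible_adm_switch_cases[OF assms(1,3)]
    by auto
  moreover have "is_sbm N" "z \<in> grd N" "w \<in> grd N"
    using assms by (auto simp: irreducible_def admissible_def)
  ultimately have "sbm_iso (with_dst N z) (with_dst N w)"
    using sbm_iso_with_dst_same_row compl_rows_compl_rows by metis
  then show False
    using no_iso by blast
qed

lemma irreducible_two_switch_classes:
  assumes "irreducible N"
  obtains z0 where "admissible N z0"
    "\<And>w. admissible N w \<Longrightarrow> sbm_iso (with_dst N w) N \<or> sbm_iso (with_dst N w) (with_dst N z0)"
proof (cases "\<exists>z. admissible N z \<and> \<not> sbm_iso (with_dst N z) N")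
  case True
  then obtain z where "admissible N z" "\<not> sbm_iso (with_dst N z) N"
    by blast
  then show ?thesis
    using that irreducible_adm_switch_pair[OF assms] sbm_iso_sym by meson
next
  case False
  moreover have "is_sbm N"
    using assms by (simp add: irreducible_def)
  ultimately show ?thesis
    by (intro that[of "dst N"] admissible_dst) auto
qed

lemma irreducible_sng_dst_admissible:
  assumes "irreducible N" "dst N = sng N" "admissible N z"
  shows "z = sng N"
proof -
  have "trivial_row N z"
    using assms(2,3) by (auto simp: admissible_def same_row_def sng_row_def zero_row_def compl_rows_def)
  then show ?thesis
    using irreducible_trivial_row[OF assms(1) admissible_dst] admissible_in_grd[OF assms(3)] assms(1,2)
    by (auto simp: irreducible_def)
qed

lemma switch_equiv_irreducible:
  assumes "irreducible N" "switch_equiv N Y"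
  shows "\<exists>z. admissible N z \<and> sbm_iso Y (with_dst N z)"
  using assms(2)
proof (induction rule: rtranclp_induct)
  case base
  have "is_sbm N"
    using assms(1) by (simp add: irreducible_def)
  then show ?case
    using admissible_dst sbm_iso_refl by (metis with_dst_simps(6))
next
  case (step y w)
  obtain z where z: "admissible N z" "sbm_iso y (with_dst N z)"
    using step(3) by blast
  show ?case
  proof (cases "sbm_iso y w")
    case True
    then show ?thesis
      using z sbm_iso_trans sbm_iso_sym by blast
  next
    case False
    then obtain v where v: "is_sbm y" "admissible y v" "w = with_dst y v"
      using step(2) by (auto simp: switch_step_def adm_switch_def)
    obtain g where g: "bij_betw g (grd y) (grd (with_dst N z))" "g (sng y) = sng (with_dst N z)"
      "g (dst y) = dst (with_dst N z)"
      "\<And>a b. a \<in> grd y \<Longrightarrow> b \<in> grd y \<Longrightarrow> frm (with_dst N z) (g a) (g b) = frm y a b"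
      "is_sbm (with_dst N z)"
      using sbm_isoE[OF z(2)] by metis
    have "admissible (with_dst N z) (g v)"
      using admissible_image[OF g(1,2,4) v(1) g(3) v(2)] .
    then have "admissible N (g v)"
      using admissible_with_dstD[OF _ z(1)] assms(1) by (simp add: irreducible_def)
    moreover have "sbm_iso w (with_dst N (g v))"
      using sbm_iso_image[OF g(1,2,4) v(1) g(5) admissible_in_grd[OF v(2)], of "{}"] v(3) by simp
    ultimately show ?thesis
      by blast
  qed
qed

lemma switch_equiv_sng_dst:
  assumes "irreducible P" "dst P = sng P" "switch_equiv P Y"
  shows "sbm_iso Y P"
  using switch_equiv_irreducible[OF assms(1,3)] irreducible_sng_dst_admissible[OF assms(1,2)] assms(2)
  by (metis with_dst_simps(6))

section \<open>The primitive matrices of a homology class\<close>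

lemma homologous_reduces_to: "is_sbm M \<Longrightarrow> reduces_to M N \<Longrightarrow> homologous M N"
  unfolding homologous_def using hom_steps_reduces_to reduces_to_is_sbm by blast

lemma primitive_homologous_cases:
  assumes "irreducible N" "reduces_to M N" "primitive Q" "homologous M Q"
  shows "(irreducible Q \<and> switch_equiv N Q) \<or>
    (dst Q \<noteq> sng Q \<and> sng_row Q (dst Q) \<and> irreducible (drop_dst Q) \<and> switch_equiv N (drop_dst Q))"
proof (cases "irreducible Q")
  case True
  then show ?thesis
    using homologous_irreducible_forms[OF assms(4,1,2) True reduces_to_refl] by blast
next
  case False
  have "is_sbm Q"
    using assms(3) by (simp add: primitive_def)
  then obtain A where "reduces Q A"
    using False by (auto simp: irreducible_def)
  then have d: "dst Q \<noteq> sng Q" "sng_row Q (dst Q)"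
    using primitive_reduces[OF assms(3)] by auto
  then show ?thesis
    using homologous_irreducible_forms[OF assms(4,1,2) irreducible_drop_dst[OF assms(3) d]]
      reduces_to_reduces[OF reduces_drop_dst[OF \<open>is_sbm Q\<close> d]] irreducible_drop_dst[OF assms(3) d] d
    by blast
qed

lemma primitive_classes_with_nonirreducible:
  assumes "irreducible N" "reduces_to M N" "primitive Q0" "homologous M Q0" "\<not> irreducible Q0"
    "primitive Q" "homologous M Q"
  shows "sbm_iso Q N \<or> sbm_iso Q Q0"
proof -
  have Q0: "dst Q0 \<noteq> sng Q0" "sng_row Q0 (dst Q0)" "irreducible (drop_dst Q0)"
    "switch_equiv N (drop_dst Q0)"
    using primitive_homologous_cases[OF assms(1-4)] assms(5) by auto
  have iso_Q0: "sbm_iso Y (drop_dst Q0)" if "switch_equiv N Y" for Y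
    using switch_equiv_sng_dst[OF Q0(3)] switch_equiv_sym[OF Q0(4)] that
    by (simp add: rtranclp_trans)
  from primitive_homologous_cases[OF assms(1,2,6,7)] show ?thesis
  proof
    assume "irreducible Q \<and> switch_equiv N Q"
    then show ?thesis
      using iso_Q0 sbm_iso_trans sbm_iso_sym by blast
  next
    assume Q: "dst Q \<noteq> sng Q \<and> sng_row Q (dst Q) \<and> irreducible (drop_dst Q) \<and>
      switch_equiv N (drop_dst Q)"
    have "is_sbm Q" "is_sbm Q0"
      using assms(3,6) by (simp_all add: primitive_def)
    then show ?thesis
      using sbm_iso_drop_dst_cancel[of Q Q0] Q Q0 iso_Q0 by blast
  qed
qed

lemma primitive_classes_all_irreducible:
  assumes "irreducible N" "reduces_to M N" "is_sbm M"
    "\<forall>Q. primitive Q \<and> homologous M Q \<longrightarrow> irreducible Q"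
  shows "\<exists>P. primitive P \<and> homologous M P \<and>
    (\<forall>Q. primitive Q \<and> homologous M Q \<longrightarrow> sbm_iso Q N \<or> sbm_iso Q P)"
proof -
  obtain z0 where z0: "admissible N z0"
    "\<And>w. admissible N w \<Longrightarrow> sbm_iso (with_dst N w) N \<or> sbm_iso (with_dst N w) (with_dst N z0)"
    using irreducible_two_switch_classes[OF assms(1)] by blast
  have switch: "adm_switch N (with_dst N z0)"
    using z0(1) assms(1) by (auto simp: adm_switch_def irreducible_def)
  then have "switch_equiv N (with_dst N z0)"
    by (simp add: r_into_rtranclp switch_step_def)
  then have "primitive (with_dst N z0)"
    using irreducible_switch_equiv[OF assms(1)] irreducible_primitive by blast
  moreover have "homologous M (with_dst N z0)"
    using homologous_reduces_to[OF assms(3) reduces_to_trans[OF assms(2) reduces_to_adm_switch[OF switch]]] .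
  moreover have "sbm_iso Q N \<or> sbm_iso Q (with_dst N z0)" if "primitive Q" "homologous M Q" for Q
  proof -
    have "irreducible Q"
      using assms(4) that by blast
    then have "\<not> (dst Q \<noteq> sng Q \<and> sng_row Q (dst Q))"
      using reduces_drop_dst by (auto simp: irreducible_def)
    then have "switch_equiv N Q"
      using primitive_homologous_cases[OF assms(1,2) that] by blast
    then obtain w where "admissible N w" "sbm_iso Q (with_dst N w)"
      using switch_equiv_irreducible[OF assms(1)] by blast
    then show ?thesis
      using z0(2) sbm_iso_trans by blast
  qed
  ultimately show ?thesis
    by blast
qed

lemma one_or_two_iso_classes:
  assumes "S P1" "S P2" "\<forall>Q. S Q \<longrightarrow> sbm_iso Q P1 \<or> sbm_iso Q P2"
  shows "(\<exists>P. S P \<and> (\<forall>Q. S Q \<longrightarrow> sbm_iso Q P)) \<or>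
    (\<exists>P1 P2. S P1 \<and> S P2 \<and> \<not> sbm_iso P1 P2 \<and> (\<forall>Q. S Q \<longrightarrow> sbm_iso Q P1 \<or> sbm_iso Q P2))"
  using assms sbm_iso_trans by blast

theorem mainTheorem10:
  fixes M :: "('h::ab_group_add) sbm"
  assumes "is_sbm M"
  shows "(\<exists>P. primitive P \<and> homologous M P \<and>
            (\<forall>Q. primitive Q \<and> homologous M Q \<longrightarrow> sbm_iso Q P))
       \<or> (\<exists>P1 P2. primitive P1 \<and> homologous M P1 \<and> primitive P2 \<and> homologous M P2 \<and>
            \<not> sbm_iso P1 P2 \<and>
            (\<forall>Q. primitive Q \<and> homologous M Q \<longrightarrow> sbm_iso Q P1 \<or> sbm_iso Q P2))"
proof -
  obtain N where N: "irreducible N" "reduces_to M N"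
    using irreducible_form_exists[OF assms] by blast
  have "primitive N" "homologous M N"
    using irreducible_primitive[OF N(1)] homologous_reduces_to[OF assms N(2)] by auto
  moreover obtain P where "primitive P" "homologous M P"
    "\<forall>Q. primitive Q \<and> homologous M Q \<longrightarrow> sbm_iso Q N \<or> sbm_iso Q P"
  proof (cases "\<exists>Q0. primitive Q0 \<and> homologous M Q0 \<and> \<not> irreducible Q0")
    case True
    then show ?thesis
      using that primitive_classes_with_nonirreducible[OF N] by blast
  next
    case False
    then show ?thesis
      using that primitive_classes_all_irreducible[OF N assms] by blast
  qed
  ultimately show ?thesis
    using one_or_two_iso_classes[of "\<lambda>Q. primitive Q \<and> homologous M Q" N P] by simp
qed

end
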